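(* Let $(M,d,\mu)$ be a non-compact metric measure space satisfying the doubling property (D) and the reverse doubling inequality (RD). Let $1\le p_0<2$, and let $L$ be a non-negative self-adjoint operator on $L^2(M)$ satisfying $(DG_\rho^{p_0})$. Then the null space of $L$ is trivial, $N(L)=\{0\}$, and hence $\overline{R(L)}=L^2(M)$.
   Context: Notation. $B(x,r)$ is the open ball of centre $x$ and radius $r$, and $V(x,r)=\mu(B(x,r))$; $p_0'$ is the conjugate exponent of $p_0$ (with $1'=\infty$). Doubling property (D): $V(x,2r)\le CV(x,r)$ for all $x\in M$ and $r>0$. Reverse doubling inequality (RD): there is $\nu'>0$ with $V(x,r)/V(x,s)\ge c(r/s)^{\nu'}$ for all $x\in M$ and $r\ge s>0$. Scaling function. Fix $1<\beta_1\le\beta_2$ and put $\rho(t)=t^{\beta_1}$ for $0<t<1$ and $\rho(t)=t^{\beta_2}$ for $t\ge1$. Condition $(DG^{p_0}_\rho)$: for all $x,y\in M$ and $t>0$, $$\|\mathbb 1_{B(x,t)}e^{-\rho(t)L}\mathbb 1_{B(y,t)}\|_{p_0\to p_0'}\le\frac{C}{V(x,t)^{1/p_0-1/p_0'}}\exp\Big(-c\big(\tfrac{d(x,y)}{t}\big)^{\beta_1/(\beta_1-1)}\Big)\quad(0<t<1),$$ and the same bound with $\beta_2$ in place of $\beta_1$ for $t\ge1$. *)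

theory Defs
  imports "HOL-Analysis.Analysis"
begin

definition mms :: "('a::metric_space) measure \<Rightarrow> bool" where
  "mms mu \<longleftrightarrow> sets mu = sets borel \<and>
     (\<forall>x r. r > 0 \<longrightarrow> 0 < emeasure mu (ball x r) \<and> emeasure mu (ball x r) < \<infinity>)"

definition V :: "('a::metric_space) measure \<Rightarrow> 'a \<Rightarrow> real \<Rightarrow> real" where
  "V mu x r = measure mu (ball x r)"

definition doubling :: "('a::metric_space) measure \<Rightarrow> bool" where
  "doubling mu \<longleftrightarrow> (\<exists>C. \<forall>x r. r > 0 \<longrightarrow> V mu x (2 * r) \<le> C * V mu x r)"

definition reverse_doubling :: "('a::metric_space) measure \<Rightarrow> bool" where
  "reverse_doubling mu \<longleftrightarrow> (\<exists>\<nu>' > 0. \<exists>c > 0. \<forall>x r s. 0 < s \<longrightarrow> s \<le> r \<longrightarrow>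
       V mu x r / V mu x s \<ge> c * (r / s) powr \<nu>')"

definition L2 :: "'a measure \<Rightarrow> ('a \<Rightarrow> complex) set" where
  "L2 mu = {f. f \<in> borel_measurable mu \<and> integrable mu (\<lambda>x. (cmod (f x))\<^sup>2)}"

definition L2norm :: "'a measure \<Rightarrow> ('a \<Rightarrow> complex) \<Rightarrow> real" where
  "L2norm mu f = sqrt (\<integral>x. (cmod (f x))\<^sup>2 \<partial>mu)"

text \<open>L^p norm for finite p (used only when it is finite).\<close>
definition Lpnorm :: "'a measure \<Rightarrow> real \<Rightarrow> ('a \<Rightarrow> complex) \<Rightarrow> real" where
  "Lpnorm mu p f = (enn2real (\<integral>\<^sup>+x. ennreal (cmod (f x) powr p) \<partial>mu)) powr (1 / p)"

definition conj_exp :: "real \<Rightarrow> ereal" where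
  "conj_exp p = (if p = 1 then \<infinity> else ereal (p / (p - 1)))"

definition Lnorm_le :: "'a measure \<Rightarrow> ereal \<Rightarrow> ('a \<Rightarrow> complex) \<Rightarrow> real \<Rightarrow> bool" where
  "Lnorm_le mu q g A \<longleftrightarrow>
     (if q = \<infinity> then (AE x in mu. cmod (g x) \<le> A)
      else 0 \<le> A \<and> (\<integral>\<^sup>+x. ennreal (cmod (g x) powr real_of_ereal q) \<partial>mu)
                      \<le> ennreal (A powr real_of_ereal q))"

text \<open>T t represents exp(-t L). A non-negative self-adjoint operator L on L^2 corresponds
exactly to a strongly continuous semigroup of self-adjoint contractions on L^2
(L is minus its generator). Functions are identified up to a.e. equality.\<close>
definition heat_semigroup :: "'a measure \<Rightarrow> (real \<Rightarrow> ('a \<Rightarrow> complex) \<Rightarrow> ('a \<Rightarrow> complex)) \<Rightarrow> bool" where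
  "heat_semigroup mu T \<longleftrightarrow>
     (\<forall>t\<ge>0. \<forall>f\<in>L2 mu. T t f \<in> L2 mu) \<and>
     (\<forall>t\<ge>0. \<forall>f\<in>L2 mu. \<forall>g\<in>L2 mu. (AE x in mu. f x = g x) \<longrightarrow> (AE x in mu. T t f x = T t g x)) \<and>
     (\<forall>t\<ge>0. \<forall>f\<in>L2 mu. \<forall>g\<in>L2 mu. \<forall>a b.
        AE x in mu. T t (\<lambda>y. a * f y + b * g y) x = a * T t f x + b * T t g x) \<and>
     (\<forall>f\<in>L2 mu. AE x in mu. T 0 f x = f x) \<and>
     (\<forall>s\<ge>0. \<forall>t\<ge>0. \<forall>f\<in>L2 mu. AE x in mu. T (s + t) f x = T s (T t f) x) \<and>
     (\<forall>t\<ge>0. \<forall>f\<in>L2 mu. L2norm mu (T t f) \<le> L2norm mu f) \<and>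
     (\<forall>t\<ge>0. \<forall>f\<in>L2 mu. \<forall>g\<in>L2 mu.
        (\<integral>x. T t f x * cnj (g x) \<partial>mu) = (\<integral>x. f x * cnj (T t g x) \<partial>mu)) \<and>
     (\<forall>f\<in>L2 mu. ((\<lambda>t. L2norm mu (\<lambda>x. T t f x - f x)) \<longlongrightarrow> 0) (at_right 0))"

text \<open>The graph of L: L f = g iff (T t f - f)/t converges to -g in L^2 as t -> 0+.\<close>
definition op_graph :: "'a measure \<Rightarrow> (real \<Rightarrow> ('a \<Rightarrow> complex) \<Rightarrow> ('a \<Rightarrow> complex))
     \<Rightarrow> ('a \<Rightarrow> complex) \<Rightarrow> ('a \<Rightarrow> complex) \<Rightarrow> bool" where
  "op_graph mu T f g \<longleftrightarrow> f \<in> L2 mu \<and> g \<in> L2 mu \<and>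
     ((\<lambda>t. L2norm mu (\<lambda>x. (T t f x - f x) / complex_of_real t + g x)) \<longlongrightarrow> 0) (at_right 0)"

definition null_space_trivial :: "'a measure \<Rightarrow> (real \<Rightarrow> ('a \<Rightarrow> complex) \<Rightarrow> ('a \<Rightarrow> complex)) \<Rightarrow> bool" where
  "null_space_trivial mu T \<longleftrightarrow>
     (\<forall>f. op_graph mu T f (\<lambda>x. 0) \<longrightarrow> (AE x in mu. f x = 0))"

definition range_dense :: "'a measure \<Rightarrow> (real \<Rightarrow> ('a \<Rightarrow> complex) \<Rightarrow> ('a \<Rightarrow> complex)) \<Rightarrow> bool" where
  "range_dense mu T \<longleftrightarrow>
     (\<forall>h\<in>L2 mu. \<forall>\<epsilon>>0. \<exists>f g. op_graph mu T f g \<and> L2norm mu (\<lambda>x. g x - h x) < \<epsilon>)"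

definition rho :: "real \<Rightarrow> real \<Rightarrow> real \<Rightarrow> real" where
  "rho \<beta>1 \<beta>2 t = (if t < 1 then t powr \<beta>1 else t powr \<beta>2)"

text \<open>DG condition: the operator norm from L^p0 to L^p0' of 1_{B(x,t)} exp(-rho(t) L) 1_{B(y,t)}
is bounded, tested on the dense class of L^2 functions (restricted to B(y,t)).\<close>
definition DG :: "('a::metric_space) measure \<Rightarrow> (real \<Rightarrow> ('a \<Rightarrow> complex) \<Rightarrow> ('a \<Rightarrow> complex))
     \<Rightarrow> real \<Rightarrow> real \<Rightarrow> real \<Rightarrow> bool" where
  "DG mu T p0 \<beta>1 \<beta>2 \<longleftrightarrow> (\<exists>C c. c > 0 \<and> (\<forall>x y t. \<forall>f\<in>L2 mu. t > 0 \<longrightarrow>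
     (let \<beta> = (if t < 1 then \<beta>1 else \<beta>2);
          f' = (\<lambda>z. indicator (ball y t) z * f z) in
      Lnorm_le mu (conj_exp p0)
        (\<lambda>z. indicator (ball x t) z * T (rho \<beta>1 \<beta>2 t) f' z)
        (C / V mu x t powr (1 / p0 - (1 - 1 / p0))
           * exp (- c * (dist x y / t) powr (\<beta> / (\<beta> - 1))) * Lpnorm mu p0 f'))))"

end

theory Submission
  imports Defs
begin

text \<open>
  If \<open>L f = 0\<close> then \<open>T s f = f\<close> for all \<open>s \<ge> 0\<close>, hence \<open>\<langle>f, g\<rangle> = \<langle>f, T s g\<rangle>\<close> for every \<open>g\<close>.
  Let \<open>g\<close> be a cutoff of \<open>f\<close>, bounded and supported in a ball \<open>B(z, n)\<close>. By the diagonal case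
  of DG on the balls \<open>B(z, t)\<close>, the \<open>L\<^sup>p\<^sup>0\<^sup>'\<close> norm of \<open>T (\<rho> t) g\<close> on \<open>B(z, t)\<close> is at most
  \<open>C V(z, t) powr (1 - 2 / p0) \<parallel>g\<parallel>\<^sub>p\<^sub>0\<close>, which tends to \<open>0\<close> as \<open>t \<rightarrow> \<infinity>\<close> because
  \<open>p0 < 2\<close> and reverse doubling makes \<open>V(z, t)\<close> unbounded. Testing against a cutoff of \<open>f\<close> on
  a fixed ball shows \<open>\<parallel>g\<parallel>\<^sup>2 = \<langle>f, g\<rangle> = 0\<close> for every cutoff \<open>g\<close>, so \<open>f = 0\<close>.

  The range is dense because \<open>h - T s h = L (\<integral>\<^sub>0\<^sup>s T r h dr)\<close> lies in it, and for a cutoff \<open>h\<close>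
  the same decay makes \<open>\<parallel>T s h\<parallel>\<^sup>2 = \<langle>h, T (2 s) h\<rangle>\<close> small for suitable \<open>s\<close>.
\<close>

section \<open>Square-integrable functions\<close>

lemma borel_measurable_cnj [measurable]:
  "f \<in> borel_measurable M \<Longrightarrow> (\<lambda>x. cnj (f x)) \<in> borel_measurable M"
  by (rule borel_measurable_continuous_on[where f = cnj])
     (auto intro: linear_continuous_on bounded_linear_cnj)

abbreviation L2inner :: "'a measure \<Rightarrow> ('a \<Rightarrow> complex) \<Rightarrow> ('a \<Rightarrow> complex) \<Rightarrow> complex" where
  "L2inner M f g \<equiv> \<integral>x. f x * cnj (g x) \<partial>M"

lemma L2_borel_measurable: "f \<in> L2 M \<Longrightarrow> f \<in> borel_measurable M"
  and L2_integrable_square: "f \<in> L2 M \<Longrightarrow> integrable M (\<lambda>x. (cmod (f x))\<^sup>2)"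
  by (auto simp: L2_def)

lemma L2I: "f \<in> borel_measurable M \<Longrightarrow> integrable M (\<lambda>x. (cmod (f x))\<^sup>2) \<Longrightarrow> f \<in> L2 M"
  by (auto simp: L2_def)

lemma L2norm_nonneg: "0 \<le> L2norm M f"
  unfolding L2norm_def by (intro real_sqrt_ge_zero integral_nonneg_AE) auto

lemma L2norm_square: "(L2norm M f)\<^sup>2 = (\<integral>x. (cmod (f x))\<^sup>2 \<partial>M)"
  unfolding L2norm_def by (simp add: integral_nonneg_AE)

lemma L2_dominated:
  assumes "f \<in> L2 M" "g \<in> borel_measurable M" "AE x in M. cmod (g x) \<le> cmod (f x)"
  shows "g \<in> L2 M"
proof (rule L2I[OF assms(2)])
  show "integrable M (\<lambda>x. (cmod (g x))\<^sup>2)"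
    by (rule Bochner_Integration.integrable_bound[OF L2_integrable_square[OF assms(1)]])
       (use assms(2,3) in \<open>auto intro!: power_mono\<close>)
qed

lemma L2_add:
  assumes "f \<in> L2 M" "g \<in> L2 M"
  shows "(\<lambda>x. f x + g x) \<in> L2 M"
proof (rule L2I)
  have "integrable M (\<lambda>x. 2 * (cmod (f x))\<^sup>2 + 2 * (cmod (g x))\<^sup>2)"
    using L2_integrable_square[OF assms(1)] L2_integrable_square[OF assms(2)] by auto
  then show "integrable M (\<lambda>x. (cmod (f x + g x))\<^sup>2)"
  proof (rule Bochner_Integration.integrable_bound)
    have "(cmod (f x + g x))\<^sup>2 \<le> 2 * (cmod (f x))\<^sup>2 + 2 * (cmod (g x))\<^sup>2" for x
    proof -
      have "(cmod (f x + g x))\<^sup>2 \<le> (cmod (f x) + cmod (g x))\<^sup>2"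
        by (intro power_mono norm_triangle_ineq) auto
      also have "\<dots> \<le> 2 * (cmod (f x))\<^sup>2 + 2 * (cmod (g x))\<^sup>2"
        using zero_le_power2[of "cmod (f x) - cmod (g x)"] by (simp add: power2_eq_square algebra_simps)
      finally show ?thesis .
    qed
    then show "AE x in M. norm ((cmod (f x + g x))\<^sup>2) \<le> norm (2 * (cmod (f x))\<^sup>2 + 2 * (cmod (g x))\<^sup>2)"
      by auto
  qed (use assms in \<open>auto dest!: L2_borel_measurable\<close>)
qed (use assms in \<open>auto dest!: L2_borel_measurable\<close>)

lemma L2_cmult: "f \<in> L2 M \<Longrightarrow> (\<lambda>x. c * f x) \<in> L2 M"
  by (rule L2I) (auto dest: L2_borel_measurable L2_integrable_square simp: norm_mult power_mult_distrib)

lemma L2_zero: "(\<lambda>x. 0) \<in> L2 M"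
  by (rule L2I) auto

lemma L2_uminus: "f \<in> L2 M \<Longrightarrow> (\<lambda>x. - f x) \<in> L2 M"
  using L2_cmult[of f M "-1"] by simp

lemma L2_diff: "f \<in> L2 M \<Longrightarrow> g \<in> L2 M \<Longrightarrow> (\<lambda>x. f x - g x) \<in> L2 M"
  using L2_add[of f M "\<lambda>x. - g x"] L2_uminus[of g M] by simp

lemma L2_sum: "(\<And>i. i \<in> I \<Longrightarrow> f i \<in> L2 M) \<Longrightarrow> (\<lambda>x. \<Sum>i\<in>I. f i x) \<in> L2 M"
  by (induction I rule: infinite_finite_induct) (auto simp: L2_zero L2_add)

lemma L2_of_real_cmod: "f \<in> L2 M \<Longrightarrow> (\<lambda>x. complex_of_real (cmod (f x))) \<in> L2 M"
  by (rule L2_dominated) (auto dest: L2_borel_measurable)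

lemma L2norm_cmult: "L2norm M (\<lambda>x. c * f x) = cmod c * L2norm M f"
  by (simp add: L2norm_def norm_mult power_mult_distrib real_sqrt_mult)

lemma L2norm_uminus: "L2norm M (\<lambda>x. - f x) = L2norm M f"
  using L2norm_cmult[of M "-1" f] by simp

lemma L2norm_divide: "L2norm M (\<lambda>x. f x / c) = L2norm M f / cmod c"
  using L2norm_cmult[of M "1 / c" f] by (simp add: norm_divide)

lemma L2norm_diff_commute: "L2norm M (\<lambda>x. f x - g x) = L2norm M (\<lambda>x. g x - f x)"
  using L2norm_uminus[of M "\<lambda>x. f x - g x"] by simp

lemma L2norm_of_real_cmod: "L2norm M (\<lambda>x. complex_of_real (cmod (f x))) = L2norm M f"
  by (simp add: L2norm_def)

lemma L2norm_cong_AE: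
  assumes "f \<in> borel_measurable M" "g \<in> borel_measurable M" "AE x in M. f x = g x"
  shows "L2norm M f = L2norm M g"
  unfolding L2norm_def using assms by (subst integral_cong_AE[where g = "\<lambda>x. (cmod (g x))\<^sup>2"]) auto

lemma L2norm_eq_0_imp_AE:
  assumes "f \<in> L2 M" "L2norm M f = 0"
  shows "AE x in M. f x = 0"
proof -
  have "(\<integral>x. (cmod (f x))\<^sup>2 \<partial>M) = 0"
    using assms(2) L2norm_square[of M f] by simp
  then show ?thesis
    using integral_nonneg_eq_0_iff_AE[OF L2_integrable_square[OF assms(1)]] by auto
qed

lemma L2norm_AE_0: "f \<in> borel_measurable M \<Longrightarrow> AE x in M. f x = 0 \<Longrightarrow> L2norm M f = 0"
  using L2norm_cong_AE[of f M "\<lambda>x. 0"] by (simp add: L2norm_def)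

lemma nn_integral_square_eq_L2norm:
  "f \<in> L2 M \<Longrightarrow> (\<integral>\<^sup>+x. ennreal ((cmod (f x))\<^sup>2) \<partial>M) = ennreal ((L2norm M f)\<^sup>2)"
  unfolding L2norm_square by (rule nn_integral_eq_integral) (auto dest: L2_integrable_square)

lemma L2_L2norm_le_of_nn_integral:
  assumes "f \<in> borel_measurable M" "(\<integral>\<^sup>+x. ennreal ((cmod (f x))\<^sup>2) \<partial>M) \<le> ennreal B" "0 \<le> B"
  shows "f \<in> L2 M" "L2norm M f \<le> sqrt B"
proof -
  have int: "integrable M (\<lambda>x. (cmod (f x))\<^sup>2)"
    unfolding integrable_iff_bounded using assms(1,2) by (auto simp: top.not_eq_extremum order.strict_trans1)
  with assms(1) show "f \<in> L2 M" by (rule L2I)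
  have "ennreal (\<integral>x. (cmod (f x))\<^sup>2 \<partial>M) \<le> ennreal B"
    using assms(2) by (subst nn_integral_eq_integral[OF int, symmetric]) auto
  then show "L2norm M f \<le> sqrt B"
    using assms(3) by (simp add: L2norm_def)
qed

lemma L2_integrable_norm_mult:
  assumes "f \<in> L2 M" "g \<in> L2 M"
  shows "integrable M (\<lambda>x. cmod (f x) * cmod (g x))"
proof (rule Bochner_Integration.integrable_bound)
  show "integrable M (\<lambda>x. (cmod (f x))\<^sup>2 + (cmod (g x))\<^sup>2)"
    using assms by (auto dest: L2_integrable_square)
  have "cmod (f x) * cmod (g x) \<le> (cmod (f x))\<^sup>2 + (cmod (g x))\<^sup>2" for x
    using sum_squares_bound[of "cmod (f x)" "cmod (g x)"]
      mult_nonneg_nonneg[OF norm_ge_zero[of "f x"] norm_ge_zero[of "g x"]]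
    unfolding power2_eq_square by linarith
  then show "AE x in M. norm (cmod (f x) * cmod (g x)) \<le> norm ((cmod (f x))\<^sup>2 + (cmod (g x))\<^sup>2)"
    by auto
qed (use assms in \<open>auto dest!: L2_borel_measurable\<close>)

lemma L2_Cauchy_Schwarz:
  assumes "f \<in> L2 M" "g \<in> L2 M"
  shows "(\<integral>x. cmod (f x) * cmod (g x) \<partial>M) \<le> L2norm M f * L2norm M g"
proof -
  have int: "integrable M (\<lambda>x. cmod (f x) * cmod (g x))"
    by (rule L2_integrable_norm_mult[OF assms])
  have "(\<integral>\<^sup>+x. ennreal (cmod (f x)) * ennreal (cmod (g x)) \<partial>M)\<^sup>2
     \<le> (\<integral>\<^sup>+x. ennreal (cmod (f x)) ^ 2 \<partial>M) * (\<integral>\<^sup>+x. ennreal (cmod (g x)) ^ 2 \<partial>M)"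
    using assms by (intro Cauchy_Schwarz_nn_integral) (auto dest!: L2_borel_measurable)
  also have "\<dots> = ennreal ((L2norm M f * L2norm M g)\<^sup>2)"
    using nn_integral_square_eq_L2norm[OF assms(1)] nn_integral_square_eq_L2norm[OF assms(2)]
    by (simp add: ennreal_power ennreal_mult power_mult_distrib)
  also have "(\<integral>\<^sup>+x. ennreal (cmod (f x)) * ennreal (cmod (g x)) \<partial>M)
      = ennreal (\<integral>x. cmod (f x) * cmod (g x) \<partial>M)"
    using nn_integral_eq_integral[OF int] by (simp add: ennreal_mult)
  finally have "ennreal ((\<integral>x. cmod (f x) * cmod (g x) \<partial>M)\<^sup>2) \<le> ennreal ((L2norm M f * L2norm M g)\<^sup>2)"
    by (simp add: ennreal_power integral_nonneg_AE)
  then have "(\<integral>x. cmod (f x) * cmod (g x) \<partial>M)\<^sup>2 \<le> (L2norm M f * L2norm M g)\<^sup>2"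
    by (simp add: ennreal_le_iff)
  then show ?thesis
    by (rule power2_le_imp_le) (simp add: L2norm_nonneg)
qed

lemma L2_integrable_inner: "f \<in> L2 M \<Longrightarrow> g \<in> L2 M \<Longrightarrow> integrable M (\<lambda>x. f x * cnj (g x))"
  by (rule Bochner_Integration.integrable_bound[OF L2_integrable_norm_mult[of f M g]])
     (auto dest!: L2_borel_measurable simp: norm_mult)

lemma L2inner_norm_le:
  assumes "f \<in> L2 M" "g \<in> L2 M"
  shows "cmod (L2inner M f g) \<le> L2norm M f * L2norm M g"
proof -
  have "cmod (L2inner M f g) \<le> (\<integral>x. cmod (f x) * cmod (g x) \<partial>M)"
    using integral_norm_bound[of M "\<lambda>x. f x * cnj (g x)"] by (simp add: norm_mult)
  also have "\<dots> \<le> L2norm M f * L2norm M g"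
    by (rule L2_Cauchy_Schwarz[OF assms])
  finally show ?thesis .
qed

lemma L2inner_cong_AE:
  assumes [measurable]: "f \<in> borel_measurable M" "f' \<in> borel_measurable M"
    "g \<in> borel_measurable M" "g' \<in> borel_measurable M"
    and "AE x in M. f x = f' x" "AE x in M. g x = g' x"
  shows "L2inner M f g = L2inner M f' g'"
proof (rule integral_cong_AE)
  show "AE x in M. f x * cnj (g x) = f' x * cnj (g' x)"
    using assms(5,6) by eventually_elim simp
qed measurable

lemma L2inner_diff_left:
  "f \<in> L2 M \<Longrightarrow> g \<in> L2 M \<Longrightarrow> h \<in> L2 M \<Longrightarrow>
    L2inner M (\<lambda>x. g x - h x) f = L2inner M g f - L2inner M h f"
  by (simp add: left_diff_distrib L2_integrable_inner)

lemma L2norm_square_eq_L2inner: "complex_of_real ((L2norm M f)\<^sup>2) = L2inner M f f"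
  unfolding L2norm_square integral_complex_of_real[symmetric] by (simp only: complex_norm_square)

lemma L2norm_triangle:
  assumes "f \<in> L2 M" "g \<in> L2 M"
  shows "L2norm M (\<lambda>x. f x + g x) \<le> L2norm M f + L2norm M g"
proof -
  have "(L2norm M (\<lambda>x. f x + g x))\<^sup>2 = (\<integral>x. (cmod (f x + g x))\<^sup>2 \<partial>M)"
    by (rule L2norm_square)
  also have "\<dots> \<le> (\<integral>x. (cmod (f x))\<^sup>2 + 2 * (cmod (f x) * cmod (g x)) + (cmod (g x))\<^sup>2 \<partial>M)"
  proof (rule integral_mono)
    show "integrable M (\<lambda>x. (cmod (f x + g x))\<^sup>2)"
      using L2_add[OF assms] by (rule L2_integrable_square)
    show "integrable M (\<lambda>x. (cmod (f x))\<^sup>2 + 2 * (cmod (f x) * cmod (g x)) + (cmod (g x))\<^sup>2)"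
      using L2_integrable_square[OF assms(1)] L2_integrable_square[OF assms(2)]
        L2_integrable_norm_mult[OF assms] by auto
    show "(cmod (f x + g x))\<^sup>2 \<le> (cmod (f x))\<^sup>2 + 2 * (cmod (f x) * cmod (g x)) + (cmod (g x))\<^sup>2" for x
      using power_mono[OF norm_triangle_ineq[of "f x" "g x"] norm_ge_zero, of 2] by (simp add: power2_sum)
  qed
  also have "\<dots> = (L2norm M f)\<^sup>2 + 2 * (\<integral>x. cmod (f x) * cmod (g x) \<partial>M) + (L2norm M g)\<^sup>2"
    using L2_integrable_square[OF assms(1)] L2_integrable_square[OF assms(2)]
      L2_integrable_norm_mult[OF assms] by (simp add: L2norm_square)
  also have "\<dots> \<le> (L2norm M f + L2norm M g)\<^sup>2"
    using L2_Cauchy_Schwarz[OF assms] by (simp add: power2_sum)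
  finally show ?thesis
    by (rule power2_le_imp_le) (simp add: L2norm_nonneg)
qed

lemma L2norm_triangle_diff:
  "f \<in> L2 M \<Longrightarrow> g \<in> L2 M \<Longrightarrow> h \<in> L2 M \<Longrightarrow>
    L2norm M (\<lambda>x. f x - h x) \<le> L2norm M (\<lambda>x. f x - g x) + L2norm M (\<lambda>x. g x - h x)"
  using L2norm_triangle[of "\<lambda>x. f x - g x" M "\<lambda>x. g x - h x"] by (simp add: L2_diff)

lemma L2norm_sum_le:
  assumes "\<And>i. i \<in> I \<Longrightarrow> f i \<in> L2 M"
  shows "L2norm M (\<lambda>x. \<Sum>i\<in>I. f i x) \<le> (\<Sum>i\<in>I. L2norm M (f i))"
  using assms
proof (induction I rule: infinite_finite_induct)
  case (insert i I)
  then have "L2norm M (\<lambda>x. f i x + (\<Sum>i\<in>I. f i x)) \<le> L2norm M (f i) + L2norm M (\<lambda>x. \<Sum>i\<in>I. f i x)"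
    by (intro L2norm_triangle L2_sum) auto
  with insert show ?case by simp
qed (simp_all add: L2norm_def)

lemma L2norm_sum_cmult_le:
  assumes "\<And>i. i \<in> I \<Longrightarrow> G i \<in> L2 M" "\<And>i. i \<in> I \<Longrightarrow> L2norm M (G i) \<le> e"
  shows "L2norm M (\<lambda>x. \<Sum>i\<in>I. c * G i x) \<le> real (card I) * cmod c * e"
proof -
  have "L2norm M (\<lambda>x. \<Sum>i\<in>I. c * G i x) \<le> (\<Sum>i\<in>I. L2norm M (\<lambda>x. c * G i x))"
    using assms(1) by (intro L2norm_sum_le L2_cmult)
  also have "\<dots> \<le> (\<Sum>i\<in>I. cmod c * e)"
    using assms(2) by (intro sum_mono) (simp add: L2norm_cmult mult_left_mono)
  finally show ?thesis
    by simp
qed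

section \<open>Completeness\<close>

lemma L2_limit_L2norm_le:
  assumes L2: "\<And>m. g m \<in> L2 M" and F: "F \<in> borel_measurable M"
    and lim: "AE x in M. (\<lambda>m. g m x) \<longlonglongrightarrow> F x"
    and bound: "\<forall>\<^sub>F m in sequentially. L2norm M (g m) \<le> B"
  shows "F \<in> L2 M" "L2norm M F \<le> B"
proof -
  obtain m where "L2norm M (g m) \<le> B"
    using bound by (auto simp: eventually_sequentially)
  then have B: "0 \<le> B"
    using L2norm_nonneg[of M "g m"] by linarith
  have [measurable]: "g m \<in> borel_measurable M" for m
    using L2 by (rule L2_borel_measurable)
  have "(\<integral>\<^sup>+x. ennreal ((cmod (F x))\<^sup>2) \<partial>M) = (\<integral>\<^sup>+x. liminf (\<lambda>m. ennreal ((cmod (g m x))\<^sup>2)) \<partial>M)"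
    using lim by (intro nn_integral_cong_AE) (auto intro!: lim_imp_Liminf[symmetric] tendsto_intros)
  also have "\<dots> \<le> liminf (\<lambda>m. \<integral>\<^sup>+x. ennreal ((cmod (g m x))\<^sup>2) \<partial>M)"
    by (intro nn_integral_liminf) measurable
  also have "\<dots> \<le> ennreal (B\<^sup>2)"
  proof (rule Liminf_le)
    show "\<forall>\<^sub>F m in sequentially. (\<integral>\<^sup>+x. ennreal ((cmod (g m x))\<^sup>2) \<partial>M) \<le> ennreal (B\<^sup>2)"
      using bound by eventually_elim
        (auto simp: nn_integral_square_eq_L2norm[OF L2] intro!: power_mono L2norm_nonneg)
  qed simp
  finally have "(\<integral>\<^sup>+x. ennreal ((cmod (F x))\<^sup>2) \<partial>M) \<le> ennreal (B\<^sup>2)" .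
  from L2_L2norm_le_of_nn_integral[OF F this] B show "F \<in> L2 M" "L2norm M F \<le> B"
    by simp_all
qed

lemma L2_incseq_AE_bounded:
  fixes D :: "nat \<Rightarrow> 'a \<Rightarrow> real"
  assumes L2: "\<And>n. (\<lambda>x. complex_of_real (D n x)) \<in> L2 M" and nonneg: "\<And>n x. 0 \<le> D n x"
    and mono: "\<And>m n x. m \<le> n \<Longrightarrow> D m x \<le> D n x"
    and bound: "\<And>n. L2norm M (\<lambda>x. complex_of_real (D n x)) \<le> B"
  shows "AE x in M. \<exists>b. \<forall>n. D n x \<le> b"
proof -
  have [measurable]: "D n \<in> borel_measurable M" for n
  proof -
    have [measurable]: "(\<lambda>x. complex_of_real (D n x)) \<in> borel_measurable M"
      using L2[of n] by (rule L2_borel_measurable)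
    have "(\<lambda>x. Re (complex_of_real (D n x))) \<in> borel_measurable M"
      by measurable
    then show ?thesis
      by simp
  qed
  define u where "u = (\<lambda>n x. ennreal ((D n x)\<^sup>2))"
  have "incseq u"
    unfolding u_def incseq_def le_fun_def
    using mono nonneg by (auto intro!: ennreal_leI power_mono)
  then have "(\<integral>\<^sup>+x. (SUP n. u n x) \<partial>M) = (SUP n. integral\<^sup>N M (u n))"
    by (intro nn_integral_monotone_convergence_SUP) (auto simp: u_def)
  also have "\<dots> \<le> ennreal (B\<^sup>2)"
  proof (rule SUP_least)
    fix n
    have "(L2norm M (\<lambda>x. complex_of_real (D n x)))\<^sup>2 \<le> B\<^sup>2"
      by (intro power_mono bound L2norm_nonneg)
    then show "integral\<^sup>N M (u n) \<le> ennreal (B\<^sup>2)"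
      using nn_integral_square_eq_L2norm[OF L2[of n]] nonneg by (simp add: u_def ennreal_leI)
  qed
  finally have "AE x in M. (SUP n. u n x) \<noteq> \<infinity>"
    by (intro nn_integral_PInf_AE) (auto simp: u_def top_unique)
  then show ?thesis
  proof eventually_elim
    case (elim x)
    then obtain b where b: "(SUP n. u n x) = ennreal b" "0 \<le> b"
      by (cases "SUP n. u n x" rule: ennreal_cases) auto
    have "(D n x)\<^sup>2 \<le> b" for n
      using SUP_upper[of n UNIV "\<lambda>n. u n x"] b
      by (auto simp: u_def ennreal_le_iff2 split: if_splits)
    then have "D n x \<le> sqrt b" for n
      using nonneg by (simp add: real_le_rsqrt)
    then show ?case
      by blast
  qed
qed

lemma L2_AE_convergent_if_geometric_increments:
  assumes L2: "\<And>k. g k \<in> L2 M"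
    and incr: "\<And>k. L2norm M (\<lambda>x. g (Suc k) x - g k x) \<le> (1/2)^k"
  shows "AE x in M. convergent (\<lambda>n. g n x)"
proof -
  define D where "D n x = (\<Sum>k<n. cmod (g (Suc k) x - g k x))" for n x
  have D_L2: "(\<lambda>x. complex_of_real (D n x)) \<in> L2 M" for n
    unfolding D_def of_real_sum using L2 by (intro L2_sum L2_of_real_cmod L2_diff)
  have "L2norm M (\<lambda>x. complex_of_real (D n x)) \<le> 2" for n
  proof -
    have "L2norm M (\<lambda>x. complex_of_real (D n x))
        \<le> (\<Sum>k<n. L2norm M (\<lambda>x. complex_of_real (cmod (g (Suc k) x - g k x))))"
      unfolding D_def of_real_sum using L2 by (intro L2norm_sum_le L2_of_real_cmod L2_diff)
    also have "\<dots> \<le> (\<Sum>k<n. (1/2::real)^k)"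
      by (intro sum_mono) (simp add: L2norm_of_real_cmod incr)
    also have "\<dots> \<le> 2"
      using geometric_sums[of "1/2::real"] sum_le_suminf[of "\<lambda>k. (1/2::real)^k" "{..<n}"]
      by (auto simp: sums_iff)
    finally show ?thesis .
  qed
  with D_L2 have "AE x in M. \<exists>b. \<forall>n. D n x \<le> b"
    by (intro L2_incseq_AE_bounded) (auto simp: D_def intro: sum_nonneg sum_mono2)
  then show ?thesis
  proof eventually_elim
    case (elim x)
    then have "summable (\<lambda>k. cmod (g (Suc k) x - g k x))"
      by (auto simp: D_def intro: summableI_nonneg_bounded)
    then have "summable (\<lambda>k. g (Suc k) x - g k x)"
      by (rule summable_norm_cancel)
    then have "convergent (\<lambda>n. g 0 x + (\<Sum>k<n. g (Suc k) x - g k x))"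
      by (intro convergent_add convergent_const) (simp add: summable_iff_convergent)
    then show "convergent (\<lambda>n. g n x)"
      by (simp add: sum_lessThan_telescope[of "\<lambda>k. g k x"])
  qed
qed

lemma Cauchy_geometric_subseq:
  fixes d :: "nat \<Rightarrow> nat \<Rightarrow> real"
  assumes Cauchy: "\<And>e. e > 0 \<Longrightarrow> \<exists>N. \<forall>m\<ge>N. \<forall>n\<ge>N. d m n < e"
  obtains r where "strict_mono r" "\<And>k m. m \<ge> r k \<Longrightarrow> d m (r k) < (1/2)^k"
proof -
  obtain N where N: "\<And>k m n. m \<ge> N k \<Longrightarrow> n \<ge> N k \<Longrightarrow> d m n < (1/2)^k"
    using Cauchy[of "(1/2)^_"] by (metis zero_less_divide_1_iff zero_less_numeral zero_less_power)
  define r where "r = rec_nat (N 0) (\<lambda>k rk. max (N (Suc k)) (Suc rk))"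
  have "strict_mono r"
    unfolding strict_mono_Suc_iff by (simp add: r_def less_max_iff_disj)
  moreover have "N k \<le> r k" for k
    by (cases k) (auto simp: r_def)
  then have "d m (r k) < (1/2)^k" if "m \<ge> r k" for k m
    using N[of k m "r k"] that by simp
  ultimately show thesis
    by (rule that)
qed

lemma L2_complete:
  fixes f :: "nat \<Rightarrow> 'a \<Rightarrow> complex"
  assumes L2: "\<And>n. f n \<in> L2 M"
    and Cauchy: "\<And>e. e > 0 \<Longrightarrow> \<exists>N. \<forall>m\<ge>N. \<forall>n\<ge>N. L2norm M (\<lambda>x. f m x - f n x) < e"
  shows "\<exists>F\<in>L2 M. \<forall>e>0. \<exists>N. \<forall>n\<ge>N. L2norm M (\<lambda>x. F x - f n x) < e"
proof -
  obtain r where "strict_mono r" and r_tail: "\<And>k m. m \<ge> r k \<Longrightarrow> L2norm M (\<lambda>x. f m x - f (r k) x) < (1/2)^k"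
    using Cauchy_geometric_subseq[of "\<lambda>m n. L2norm M (\<lambda>x. f m x - f n x)"] Cauchy by blast
  define g where "g k = f (r k)" for k
  have g_L2: "g k \<in> L2 M" for k
    by (simp add: g_def L2)
  have g_tail: "L2norm M (\<lambda>x. g m x - g k x) \<le> (1/2)^k" if "m \<ge> k" for k m
    using r_tail[of k "r m"] strict_mono_less_eq[OF \<open>strict_mono r\<close>] that
    by (simp add: g_def less_imp_le)
  have conv: "AE x in M. convergent (\<lambda>n. g n x)"
    using g_L2 g_tail by (rule L2_AE_convergent_if_geometric_increments) simp
  define F where "F x = lim (\<lambda>n. g n x)" for x
  have lim: "AE x in M. (\<lambda>n. g n x) \<longlonglongrightarrow> F x"
    using conv by eventually_elim (simp add: F_def convergent_LIMSEQ_iff)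
  have [measurable]: "g k \<in> borel_measurable M" for k
    using g_L2 by (rule L2_borel_measurable)
  have F_meas [measurable]: "F \<in> borel_measurable M"
    unfolding F_def[abs_def] by measurable
  have tail: "(\<lambda>x. F x - g k x) \<in> L2 M \<and> L2norm M (\<lambda>x. F x - g k x) \<le> (1/2)^k" for k
  proof -
    have "AE x in M. (\<lambda>m. g m x - g k x) \<longlonglongrightarrow> F x - g k x"
      using lim by eventually_elim (rule tendsto_diff, auto)
    moreover have "\<forall>\<^sub>F m in sequentially. L2norm M (\<lambda>x. g m x - g k x) \<le> (1/2)^k"
      using g_tail by (auto simp: eventually_sequentially)
    ultimately show ?thesis
      using L2_limit_L2norm_le[of "\<lambda>m x. g m x - g k x" M "\<lambda>x. F x - g k x"] g_L2
      by (auto intro: L2_diff)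
  qed
  have F_L2: "F \<in> L2 M"
    using L2_add[OF conjunct1[OF tail[of 0]] g_L2[of 0]] by simp
  show ?thesis
  proof (intro bexI[OF _ F_L2] allI impI)
    fix e :: real
    assume "e > 0"
    then obtain k where k: "(1/2::real)^k < e/2"
      using real_arch_pow_inv[of "e/2" "1/2"] by auto
    have "L2norm M (\<lambda>x. F x - f n x) < e" if "n \<ge> r k" for n
    proof -
      have "L2norm M (\<lambda>x. F x - f n x) \<le> L2norm M (\<lambda>x. F x - g k x) + L2norm M (\<lambda>x. g k x - f n x)"
        by (rule L2norm_triangle_diff[OF F_L2 g_L2 L2])
      also have "L2norm M (\<lambda>x. g k x - f n x) < (1/2)^k"
        using r_tail[OF that] by (simp add: g_def L2norm_diff_commute)
      finally show ?thesis
        using tail[of k] k by linarith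
    qed
    then show "\<exists>N. \<forall>n\<ge>N. L2norm M (\<lambda>x. F x - f n x) < e"
      by blast
  qed
qed

definition cutoff :: "'a::metric_space \<Rightarrow> nat \<Rightarrow> ('a \<Rightarrow> complex) \<Rightarrow> 'a \<Rightarrow> complex" where
  "cutoff z n f x = (if x \<in> ball z n \<and> cmod (f x) \<le> n then f x else 0)"

lemma cutoff_norm_le: "cmod (cutoff z n f x) \<le> cmod (f x)"
  and cutoff_bounded: "cmod (cutoff z n f x) \<le> n"
  and cutoff_outside_ball: "x \<notin> ball z n \<Longrightarrow> cutoff z n f x = 0"
  by (auto simp: cutoff_def)

lemma cutoff_eventually_eq: "\<forall>\<^sub>F n in sequentially. cutoff z n f x = f x"
proof -
  obtain N :: nat where N: "dist z x + cmod (f x) < N"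
    using reals_Archimedean2 by blast
  have "dist z x < n \<and> cmod (f x) \<le> n" if "n \<ge> N" for n
  proof -
    have "real N \<le> n"
      using that by simp
    with N show ?thesis
      using zero_le_dist[of z x] norm_ge_zero[of "f x"] by linarith
  qed
  then show ?thesis
    by (auto simp: cutoff_def eventually_sequentially)
qed

lemma cutoff_borel_measurable:
  fixes M :: "'a::metric_space measure"
  assumes "sets M = sets borel" "f \<in> borel_measurable M"
  shows "cutoff z n f \<in> borel_measurable M"
proof -
  have [measurable]: "ball z n \<in> sets M"
    using assms(1) by simp
  show ?thesis
    unfolding cutoff_def[abs_def] using assms(2) by measurable
qed

lemma cutoff_L2:
  fixes M :: "'a::metric_space measure"
  assumes "sets M = sets borel" "f \<in> L2 M"
  shows "cutoff z n f \<in> L2 M"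
  by (rule L2_dominated[OF assms(2) cutoff_borel_measurable[OF assms(1) L2_borel_measurable[OF assms(2)]]])
    (simp add: cutoff_norm_le)

lemma cutoff_approx:
  fixes M :: "'a::metric_space measure"
  assumes "sets M = sets borel" "f \<in> L2 M" "e > 0"
  obtains n where "L2norm M (\<lambda>x. f x - cutoff z n f x) < e"
proof -
  have [measurable]: "f \<in> borel_measurable M" "cutoff z n f \<in> borel_measurable M" for n
    using assms by (auto intro: L2_borel_measurable cutoff_borel_measurable)
  have "(\<lambda>n. \<integral>x. (cmod (f x - cutoff z n f x))\<^sup>2 \<partial>M) \<longlonglongrightarrow> (\<integral>x. 0 \<partial>M)"
  proof (rule integral_dominated_convergence[where w = "\<lambda>x. (cmod (f x))\<^sup>2"])
    show "integrable M (\<lambda>x. (cmod (f x))\<^sup>2)"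
      using assms(2) by (rule L2_integrable_square)
    have "(\<lambda>n. (cmod (f x - cutoff z n f x))\<^sup>2) \<longlonglongrightarrow> 0" for x
      using cutoff_eventually_eq[of z f x] by (intro tendsto_eventually) (auto elim!: eventually_mono)
    then show "AE x in M. (\<lambda>n. (cmod (f x - cutoff z n f x))\<^sup>2) \<longlonglongrightarrow> 0"
      by simp
    show "AE x in M. norm ((cmod (f x - cutoff z n f x))\<^sup>2) \<le> (cmod (f x))\<^sup>2" for n
      by (auto simp: cutoff_def)
  qed measurable
  then have "(\<lambda>n. L2norm M (\<lambda>x. f x - cutoff z n f x)) \<longlonglongrightarrow> sqrt 0"
    unfolding L2norm_def by (intro tendsto_intros) simp
  then obtain N where "\<And>n. n \<ge> N \<Longrightarrow> L2norm M (\<lambda>x. f x - cutoff z n f x) < e"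
    using order_tendstoD(2)[of _ 0 _ e] assms(3) by (force simp: eventually_sequentially)
  then show thesis
    using that by blast
qed

lemma L2inner_cutoff: "L2inner M f (cutoff z n f) = complex_of_real ((L2norm M (cutoff z n f))\<^sup>2)"
  unfolding L2norm_square_eq_L2inner by (intro Bochner_Integration.integral_cong) (auto simp: cutoff_def)

lemma Young_type_inequality:
  fixes y d q :: real
  assumes "y \<ge> 0" "d > 0" "q \<ge> 1"
  shows "y \<le> d + d powr (1 - q) * y powr q"
proof (cases "y \<le> d")
  case True
  then show ?thesis
    by (simp add: add_increasing2)
next
  case False
  then have "d powr (q - 1) \<le> y powr (q - 1)" "y > 0"
    using assms by (auto intro: powr_mono2)
  then have "d powr (q - 1) * y \<le> y powr q"
    using powr_add[of y "q - 1" 1] by (simp add: mult_right_mono)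
  then have "d powr (1 - q) * (d powr (q - 1) * y) \<le> d powr (1 - q) * y powr q"
    by (simp add: mult_left_mono)
  moreover have "d powr (1 - q) * d powr (q - 1) = 1"
    using assms(2) by (simp flip: powr_add)
  ultimately show ?thesis
    using assms by (simp add: mult.assoc[symmetric] add_increasing)
qed

lemma small_Lq_norm_imp_small_integral_on:
  fixes \<eta> q :: real
  assumes "q \<ge> 1" and B: "B \<in> sets M" "emeasure M B < \<infinity>" and "\<eta> > 0"
  obtains \<alpha> where "\<alpha> > 0"
    "\<And>u A. u \<in> borel_measurable M \<Longrightarrow> 0 \<le> A \<Longrightarrow> A \<le> \<alpha> \<Longrightarrow>
       (\<integral>\<^sup>+x. ennreal (cmod (u x) powr q) \<partial>M) \<le> ennreal (A powr q) \<Longrightarrow>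
       (\<integral>\<^sup>+x. indicator B x * ennreal (cmod (u x)) \<partial>M) \<le> ennreal \<eta>"
proof -
  obtain \<mu> where \<mu>: "emeasure M B = ennreal \<mu>" "\<mu> \<ge> 0"
    using B(2) by (cases "emeasure M B" rule: ennreal_cases) auto
  define d where "d = \<eta> / (2 * (\<mu> + 1))"
  have d: "d > 0" "d * \<mu> \<le> \<eta> / 2"
    using \<open>\<eta> > 0\<close> \<mu> by (auto simp: d_def field_simps)
  define \<alpha> where "\<alpha> = (\<eta> / 2 * d powr (q - 1)) powr (1 / q)"
  have \<alpha>_q: "d powr (1 - q) * \<alpha> powr q = \<eta> / 2"
    using \<open>\<eta> > 0\<close> d \<open>q \<ge> 1\<close> by (simp add: \<alpha>_def powr_powr mult.left_commute flip: powr_add)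
  show thesis
  proof (rule that)
    show "\<alpha> > 0"
      using \<open>\<eta> > 0\<close> d by (simp add: \<alpha>_def)
    fix u :: "'a \<Rightarrow> complex" and A
    assume [measurable]: "u \<in> borel_measurable M" and A: "0 \<le> A" "A \<le> \<alpha>"
      "(\<integral>\<^sup>+x. ennreal (cmod (u x) powr q) \<partial>M) \<le> ennreal (A powr q)"
    have "indicator B x * ennreal (cmod (u x))
        \<le> ennreal d * indicator B x + ennreal (d powr (1 - q)) * ennreal (cmod (u x) powr q)" for x
    proof (cases "x \<in> B")
      case True
      have "ennreal (cmod (u x)) \<le> ennreal (d + d powr (1 - q) * cmod (u x) powr q)"
        using Young_type_inequality[OF norm_ge_zero d(1) \<open>q \<ge> 1\<close>] by (rule ennreal_leI)
      also have "\<dots> = ennreal d + ennreal (d powr (1 - q)) * ennreal (cmod (u x) powr q)"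
        using d(1) by (simp add: ennreal_mult)
      finally show ?thesis
        using True by simp
    qed simp
    then have "(\<integral>\<^sup>+x. indicator B x * ennreal (cmod (u x)) \<partial>M)
        \<le> (\<integral>\<^sup>+x. ennreal d * indicator B x + ennreal (d powr (1 - q)) * ennreal (cmod (u x) powr q) \<partial>M)"
      by (intro nn_integral_mono)
    also have "\<dots> = ennreal d * emeasure M B + ennreal (d powr (1 - q)) * (\<integral>\<^sup>+x. ennreal (cmod (u x) powr q) \<partial>M)"
      using B(1) by (simp add: nn_integral_add nn_integral_cmult nn_integral_cmult_indicator)
    also have "\<dots> \<le> ennreal (d * \<mu>) + ennreal (d powr (1 - q) * A powr q)"
      using A(3) d(1) \<mu> by (intro add_mono) (auto simp: ennreal_mult intro: mult_left_mono)
    also have "\<dots> \<le> ennreal (d * \<mu> + \<eta> / 2)"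
    proof -
      have "d powr (1 - q) * A powr q \<le> d powr (1 - q) * \<alpha> powr q"
        using A \<open>q \<ge> 1\<close> by (intro mult_left_mono powr_mono2) auto
      then show ?thesis
        using d \<mu> \<alpha>_q by (simp flip: ennreal_plus add: ennreal_leI)
    qed
    also have "\<dots> \<le> ennreal \<eta>"
      using d(2) by (intro ennreal_leI) simp
    finally show "(\<integral>\<^sup>+x. indicator B x * ennreal (cmod (u x)) \<partial>M) \<le> ennreal \<eta>" .
  qed
qed

lemma small_Lnorm_imp_small_integral_on:
  fixes \<eta> :: real
  assumes "1 \<le> p" and B: "B \<in> sets M" "emeasure M B < \<infinity>" and "\<eta> > 0"
  obtains \<alpha> where "\<alpha> > 0"
    "\<And>u A. u \<in> borel_measurable M \<Longrightarrow> A \<le> \<alpha> \<Longrightarrow> Lnorm_le M (conj_exp p) u A \<Longrightarrow>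
       (\<integral>\<^sup>+x. indicator B x * ennreal (cmod (u x)) \<partial>M) \<le> ennreal \<eta>"
proof (cases "p = 1")
  case True
  obtain \<mu> where \<mu>: "emeasure M B = ennreal \<mu>" "\<mu> \<ge> 0"
    using B(2) by (cases "emeasure M B" rule: ennreal_cases) auto
  define \<alpha> where "\<alpha> = \<eta> / (\<mu> + 1)"
  show thesis
  proof (rule that)
    show "\<alpha> > 0"
      using \<open>\<eta> > 0\<close> \<mu> by (simp add: \<alpha>_def)
    fix u :: "'a \<Rightarrow> complex" and A
    assume "A \<le> \<alpha>" "Lnorm_le M (conj_exp p) u A"
    then have "AE x in M. cmod (u x) \<le> \<alpha>"
      using True by (auto simp: Lnorm_le_def conj_exp_def)
    then have "(\<integral>\<^sup>+x. indicator B x * ennreal (cmod (u x)) \<partial>M) \<le> (\<integral>\<^sup>+x. ennreal \<alpha> * indicator B x \<partial>M)"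
      by (intro nn_integral_mono_AE) (auto simp: indicator_def ennreal_leI)
    also have "\<dots> = ennreal (\<alpha> * \<mu>)"
      using B(1) \<mu> \<open>\<alpha> > 0\<close> by (simp add: nn_integral_cmult_indicator ennreal_mult)
    also have "\<alpha> * \<mu> \<le> \<eta>"
      using \<open>\<eta> > 0\<close> \<mu> by (simp add: \<alpha>_def field_simps)
    finally show "(\<integral>\<^sup>+x. indicator B x * ennreal (cmod (u x)) \<partial>M) \<le> ennreal \<eta>"
      by (simp add: ennreal_leI)
  qed
next
  case False
  define q where "q = p / (p - 1)"
  have q: "q \<ge> 1" "conj_exp p = ereal q"
    using False \<open>1 \<le> p\<close> by (auto simp: q_def conj_exp_def field_simps)
  obtain \<alpha> where "\<alpha> > 0" and small: "\<And>u A. u \<in> borel_measurable M \<Longrightarrow> 0 \<le> A \<Longrightarrow> A \<le> \<alpha> \<Longrightarrow>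
       (\<integral>\<^sup>+x. ennreal (cmod (u x) powr q) \<partial>M) \<le> ennreal (A powr q) \<Longrightarrow>
       (\<integral>\<^sup>+x. indicator B x * ennreal (cmod (u x)) \<partial>M) \<le> ennreal \<eta>"
    using small_Lq_norm_imp_small_integral_on[OF q(1) B \<open>\<eta> > 0\<close>] by blast
  show thesis
    by (rule that[OF \<open>\<alpha> > 0\<close>]) (auto simp: Lnorm_le_def q(2) intro: small)
qed

lemma L2inner_le_of_bounded_support:
  fixes K \<eta> :: real
  assumes f: "f \<in> L2 M" and g: "g \<in> L2 M" and B: "B \<in> sets M"
    and bound: "\<And>x. cmod (f x) \<le> K" and supp: "\<And>x. x \<notin> B \<Longrightarrow> f x = 0"
    and small: "(\<integral>\<^sup>+x. indicator B x * ennreal (cmod (g x)) \<partial>M) \<le> ennreal \<eta>" and "0 \<le> \<eta>"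
  shows "cmod (L2inner M f g) \<le> K * \<eta>"
proof -
  have "0 \<le> K"
    using bound[of undefined] norm_ge_zero order_trans by blast
  have [measurable]: "g \<in> borel_measurable M" "B \<in> sets M"
    using g B by (auto intro: L2_borel_measurable)
  have "ennreal (\<integral>x. cmod (f x) * cmod (g x) \<partial>M) = (\<integral>\<^sup>+x. ennreal (cmod (f x) * cmod (g x)) \<partial>M)"
    using L2_integrable_norm_mult[OF f g] by (simp add: nn_integral_eq_integral)
  also have "\<dots> \<le> (\<integral>\<^sup>+x. ennreal K * (indicator B x * ennreal (cmod (g x))) \<partial>M)"
  proof (rule nn_integral_mono)
    fix x
    show "ennreal (cmod (f x) * cmod (g x)) \<le> ennreal K * (indicator B x * ennreal (cmod (g x)))"
    proof (cases "x \<in> B")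
      case True
      have "cmod (f x) * cmod (g x) \<le> K * cmod (g x)"
        using bound[of x] by (intro mult_right_mono) auto
      then show ?thesis
        using True \<open>0 \<le> K\<close> by (simp add: ennreal_leI flip: ennreal_mult)
    qed (simp add: supp)
  qed
  also have "\<dots> = ennreal K * (\<integral>\<^sup>+x. indicator B x * ennreal (cmod (g x)) \<partial>M)"
    by (intro nn_integral_cmult) measurable
  also have "\<dots> \<le> ennreal K * ennreal \<eta>"
    using small by (rule mult_left_mono) simp
  also have "\<dots> = ennreal (K * \<eta>)"
    using \<open>0 \<le> K\<close> \<open>0 \<le> \<eta>\<close> by (simp add: ennreal_mult)
  finally have "(\<integral>x. cmod (f x) * cmod (g x) \<partial>M) \<le> K * \<eta>"
    using \<open>0 \<le> K\<close> \<open>0 \<le> \<eta>\<close> by (simp add: ennreal_le_iff)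
  then show ?thesis
    using integral_norm_bound[of M "\<lambda>x. f x * cnj (g x)"] by (simp add: norm_mult)
qed

lemma sum_lessThan_add_split:
  fixes a :: "nat \<Rightarrow> 'b::comm_monoid_add"
  shows "(\<Sum>j<n + k. a j) = (\<Sum>j<n. a j) + (\<Sum>i<k. a (n + i))"
  by (induction k) (simp_all add: add.assoc)

lemma sum_lessThan_mult_split:
  fixes a :: "nat \<Rightarrow> 'b::comm_monoid_add"
  shows "(\<Sum>j<n * k. a j) = (\<Sum>l<n. \<Sum>i<k. a (l * k + i))"
proof (induction n)
  case (Suc n)
  have "(\<Sum>j<Suc n * k. a j) = (\<Sum>j<n * k + k. a j)"
    by (simp add: add.commute)
  also have "\<dots> = (\<Sum>j<n * k. a j) + (\<Sum>i<k. a (n * k + i))"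
    by (rule sum_lessThan_add_split)
  finally show ?case
    using Suc by simp
qed simp

lemma sum_lessThan_shift_diff:
  fixes a :: "nat \<Rightarrow> 'b::ab_group_add"
  shows "(\<Sum>k<n. a (k + m)) - (\<Sum>k<n. a k) = (\<Sum>k<m. a (n + k)) - (\<Sum>k<m. a k)"
  using sum_lessThan_add_split[of a m n] sum_lessThan_add_split[of a n m]
  by (simp add: add.commute algebra_simps)

section \<open>Symmetric contraction semigroups\<close>

locale symmetric_contraction_semigroup =
  fixes M :: "'a measure" and T :: "real \<Rightarrow> ('a \<Rightarrow> complex) \<Rightarrow> ('a \<Rightarrow> complex)"
  assumes heat_semigroup: "heat_semigroup M T"
begin

lemma T_L2: "t \<ge> 0 \<Longrightarrow> f \<in> L2 M \<Longrightarrow> T t f \<in> L2 M"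
  and T_linear: "t \<ge> 0 \<Longrightarrow> f \<in> L2 M \<Longrightarrow> g \<in> L2 M \<Longrightarrow>
    AE x in M. T t (\<lambda>y. a * f y + b * g y) x = a * T t f x + b * T t g x"
  and T_0: "f \<in> L2 M \<Longrightarrow> AE x in M. T 0 f x = f x"
  and T_add_time: "s \<ge> 0 \<Longrightarrow> t \<ge> 0 \<Longrightarrow> f \<in> L2 M \<Longrightarrow> AE x in M. T (s + t) f x = T s (T t f) x"
  and T_contraction: "t \<ge> 0 \<Longrightarrow> f \<in> L2 M \<Longrightarrow> L2norm M (T t f) \<le> L2norm M f"
  and T_self_adjoint: "t \<ge> 0 \<Longrightarrow> f \<in> L2 M \<Longrightarrow> g \<in> L2 M \<Longrightarrow> L2inner M (T t f) g = L2inner M f (T t g)"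
  and T_strongly_continuous:
    "f \<in> L2 M \<Longrightarrow> ((\<lambda>t. L2norm M (\<lambda>x. T t f x - f x)) \<longlongrightarrow> 0) (at_right 0)"
  using heat_semigroup by (simp_all add: heat_semigroup_def)

lemma T_borel_measurable: "t \<ge> 0 \<Longrightarrow> f \<in> L2 M \<Longrightarrow> T t f \<in> borel_measurable M"
  by (rule L2_borel_measurable[OF T_L2])

lemma T_diff: "t \<ge> 0 \<Longrightarrow> f \<in> L2 M \<Longrightarrow> g \<in> L2 M \<Longrightarrow>
    AE x in M. T t (\<lambda>y. f y - g y) x = T t f x - T t g x"
  using T_linear[of t f g 1 "-1"] by simp

lemma T_sum:
  assumes "t \<ge> 0" "finite I" "\<And>i. i \<in> I \<Longrightarrow> f i \<in> L2 M"
  shows "AE x in M. T t (\<lambda>y. \<Sum>i\<in>I. c i * f i y) x = (\<Sum>i\<in>I. c i * T t (f i) x)"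
  using assms(2,3)
proof (induction I rule: finite_induct)
  case empty
  then show ?case
    using T_linear[OF assms(1) L2_zero L2_zero, of 0 0] by simp
next
  case (insert j I)
  have "(\<lambda>y. \<Sum>i\<in>I. c i * f i y) \<in> L2 M"
    using insert by (intro L2_sum L2_cmult) auto
  then have "AE x in M. T t (\<lambda>y. c j * f j y + 1 * (\<Sum>i\<in>I. c i * f i y)) x
      = c j * T t (f j) x + 1 * T t (\<lambda>y. \<Sum>i\<in>I. c i * f i y) x"
    using insert by (intro T_linear assms(1)) auto
  moreover have "AE x in M. T t (\<lambda>y. \<Sum>i\<in>I. c i * f i y) x = (\<Sum>i\<in>I. c i * T t (f i) x)"
    using insert by simp
  ultimately show ?case
    by eventually_elim (simp add: insert.hyps)
qed

lemma T_contraction_diff: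
  assumes "t \<ge> 0" "f \<in> L2 M" "g \<in> L2 M"
  shows "L2norm M (\<lambda>x. T t f x - T t g x) \<le> L2norm M (\<lambda>x. f x - g x)"
proof -
  have "AE x in M. T t f x - T t g x = T t (\<lambda>y. f y - g y) x"
    using T_diff[OF assms] by eventually_elim simp
  then have "L2norm M (\<lambda>x. T t f x - T t g x) = L2norm M (T t (\<lambda>y. f y - g y))"
    using assms by (intro L2norm_cong_AE) (auto intro!: L2_borel_measurable L2_diff T_L2)
  also have "\<dots> \<le> L2norm M (\<lambda>x. f x - g x)"
    using assms by (intro T_contraction L2_diff)
  finally show ?thesis .
qed

lemma T_increment_shift_le:
  assumes "a \<ge> 0" "v \<ge> 0" "h \<in> L2 M"
  shows "L2norm M (\<lambda>x. T (a + v) h x - T a h x) \<le> L2norm M (\<lambda>x. T v h x - h x)"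
proof -
  have "L2norm M (\<lambda>x. T (a + v) h x - T a h x) = L2norm M (\<lambda>x. T a (T v h) x - T a h x)"
    using assms T_add_time[OF assms] by (intro L2norm_cong_AE) (auto intro!: L2_borel_measurable L2_diff T_L2)
  also have "\<dots> \<le> L2norm M (\<lambda>x. T v h x - h x)"
    using assms by (intro T_contraction_diff T_L2)
  finally show ?thesis .
qed

lemma L2norm_sum_T_increments_le:
  assumes h: "h \<in> L2 M" and a: "\<And>k. k \<in> I \<Longrightarrow> 0 \<le> a k" and v: "\<And>k. k \<in> I \<Longrightarrow> 0 \<le> v k"
    and small: "\<And>k. k \<in> I \<Longrightarrow> L2norm M (\<lambda>x. T (v k) h x - h x) \<le> e"
  shows "L2norm M (\<lambda>x. \<Sum>k\<in>I. c * (T (a k + v k) h x - T (a k) h x)) \<le> real (card I) * cmod c * e"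
proof (rule L2norm_sum_cmult_le)
  fix k
  assume "k \<in> I"
  then show "(\<lambda>x. T (a k + v k) h x - T (a k) h x) \<in> L2 M"
    using h a v by (intro L2_diff T_L2) auto
  show "L2norm M (\<lambda>x. T (a k + v k) h x - T (a k) h x) \<le> e"
    using T_increment_shift_le[OF a v h] small \<open>k \<in> I\<close> by (meson order_trans)
qed

lemma T_increment_small:
  assumes "h \<in> L2 M" "e > 0"
  obtains d where "d > 0" "\<And>v. 0 \<le> v \<Longrightarrow> v < d \<Longrightarrow> L2norm M (\<lambda>x. T v h x - h x) < e"
proof -
  obtain d where d: "d > 0" "\<And>t. 0 < t \<Longrightarrow> t < d \<Longrightarrow> L2norm M (\<lambda>x. T t h x - h x) < e"
    using order_tendstoD(2)[OF T_strongly_continuous[OF assms(1)] assms(2)]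
    unfolding eventually_at_right_field by auto
  have "L2norm M (\<lambda>x. T 0 h x - h x) = 0"
    using assms(1) T_0[OF assms(1)] by (intro L2norm_AE_0) (auto intro!: L2_borel_measurable L2_diff T_L2)
  with d assms(2) show thesis
    by (intro that[OF d(1)]) (metis order_le_less)
qed

lemma T_multiple_increment_le:
  assumes "\<tau> \<ge> 0" "f \<in> L2 M"
  shows "L2norm M (\<lambda>x. T (real n * \<tau>) f x - f x) \<le> real n * L2norm M (\<lambda>x. T \<tau> f x - f x)"
proof (induction n)
  case 0
  have "L2norm M (\<lambda>x. T 0 f x - f x) = 0"
    using assms(2) T_0[OF assms(2)] by (auto intro!: L2norm_AE_0 L2_borel_measurable L2_diff T_L2)
  then show ?case
    by simp
next
  case (Suc n)
  have eq: "real (Suc n) * \<tau> = real n * \<tau> + \<tau>"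
    by (simp add: algebra_simps)
  have "L2norm M (\<lambda>x. T (real (Suc n) * \<tau>) f x - f x)
      \<le> L2norm M (\<lambda>x. T (real n * \<tau> + \<tau>) f x - T (real n * \<tau>) f x)
        + L2norm M (\<lambda>x. T (real n * \<tau>) f x - f x)"
    unfolding eq by (rule L2norm_triangle_diff) (use assms in \<open>auto intro: T_L2\<close>)
  also have "\<dots> \<le> L2norm M (\<lambda>x. T \<tau> f x - f x) + real n * L2norm M (\<lambda>x. T \<tau> f x - f x)"
    using assms Suc by (intro add_mono T_increment_shift_le) auto
  finally show ?case
    by (simp add: algebra_simps)
qed

lemma null_vector_fixed:
  assumes null: "op_graph M T f (\<lambda>x. 0)" and "s \<ge> 0"
  shows "AE x in M. T s f x = f x"
proof -
  have f: "f \<in> L2 M"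
    using null by (simp add: op_graph_def)
  have bound: "L2norm M (\<lambda>x. T s f x - f x) \<le> e * s" if e: "e > 0" for e
  proof (cases "s = 0")
    case True
    then show ?thesis
      using T_multiple_increment_le[OF order_refl f, of 0] by simp
  next
    case False
    with \<open>s \<ge> 0\<close> have s: "s > 0" by simp
    obtain d where d: "d > 0" "\<And>t. 0 < t \<Longrightarrow> t < d \<Longrightarrow> L2norm M (\<lambda>x. (T t f x - f x) / complex_of_real t) < e"
      using order_tendstoD(2)[OF null[unfolded op_graph_def, THEN conjunct2, THEN conjunct2] e]
      unfolding eventually_at_right_field by auto
    obtain n :: nat where n: "s / d < n"
      using reals_Archimedean2 by blast
    with s d(1) have "n > 0"
      by (cases n) (auto simp: field_simps)
    define \<tau> where "\<tau> = s / n"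
    have \<tau>: "\<tau> > 0" "\<tau> < d" "real n * \<tau> = s"
      using s n d(1) \<open>n > 0\<close> by (auto simp: \<tau>_def field_simps)
    have "L2norm M (\<lambda>x. T \<tau> f x - f x) / \<tau> < e"
      using d(2)[OF \<tau>(1,2)] \<tau>(1) by (simp add: L2norm_divide)
    then have "real n * L2norm M (\<lambda>x. T \<tau> f x - f x) \<le> real n * (\<tau> * e)"
      using \<tau>(1) by (intro mult_left_mono) (auto simp: field_simps)
    also have "\<dots> = e * s"
      using \<tau>(3) by simp
    finally have "real n * L2norm M (\<lambda>x. T \<tau> f x - f x) \<le> e * s" .
    with T_multiple_increment_le[OF less_imp_le[OF \<tau>(1)] f, of n] \<tau>(3) show ?thesis
      by simp
  qed
  have "L2norm M (\<lambda>x. T s f x - f x) \<le> 0 + e" if "e > 0" for e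
  proof -
    have "L2norm M (\<lambda>x. T s f x - f x) \<le> e / (s + 1) * s"
      using bound[of "e / (s + 1)"] \<open>s \<ge> 0\<close> \<open>e > 0\<close> by simp
    also have "\<dots> \<le> e"
      using \<open>s \<ge> 0\<close> \<open>e > 0\<close> by (simp add: field_simps)
    finally show ?thesis by simp
  qed
  then have "L2norm M (\<lambda>x. T s f x - f x) \<le> 0"
    by (rule field_le_epsilon)
  then show ?thesis
    using L2norm_eq_0_imp_AE[of "\<lambda>x. T s f x - f x" M] L2norm_nonneg[of M "\<lambda>x. T s f x - f x"]
      f \<open>s \<ge> 0\<close> by (auto intro: L2_diff T_L2)
qed

lemma L2inner_T_null_vector:
  assumes null: "op_graph M T f (\<lambda>x. 0)" and g: "g \<in> L2 M" and "s \<ge> 0"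
  shows "L2inner M f (T s g) = L2inner M f g"
proof -
  have f: "f \<in> L2 M"
    using null by (simp add: op_graph_def)
  have "L2inner M f (T s g) = L2inner M (T s f) g"
    using T_self_adjoint[OF \<open>s \<ge> 0\<close> f g] by simp
  also have "\<dots> = L2inner M f g"
    using null_vector_fixed[OF null \<open>s \<ge> 0\<close>] f g \<open>s \<ge> 0\<close>
    by (intro L2inner_cong_AE) (auto intro: T_borel_measurable L2_borel_measurable)
  finally show ?thesis .
qed

lemma L2norm_T_square:
  assumes "h \<in> L2 M" "s \<ge> 0"
  shows "complex_of_real ((L2norm M (T s h))\<^sup>2) = L2inner M h (T (s + s) h)"
proof -
  have "complex_of_real ((L2norm M (T s h))\<^sup>2) = L2inner M (T s h) (T s h)"
    by (rule L2norm_square_eq_L2inner)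
  also have "\<dots> = L2inner M h (T s (T s h))"
    using assms by (intro T_self_adjoint T_L2)
  also have "\<dots> = L2inner M h (T (s + s) h)"
    using assms T_add_time[OF assms(2,2,1)]
    by (intro L2inner_cong_AE) (auto intro: T_borel_measurable L2_borel_measurable T_L2 AE_symmetric)
  finally show ?thesis .
qed

text \<open>\<open>Riemann_sum h s n\<close> approximates \<open>\<integral>\<^sub>0\<^sup>s T r h dr\<close>, an element of the domain of \<open>L\<close>
  with image \<open>h - T s h\<close>.\<close>

definition Riemann_sum :: "('a \<Rightarrow> complex) \<Rightarrow> real \<Rightarrow> nat \<Rightarrow> 'a \<Rightarrow> complex" where
  "Riemann_sum h s n x = (\<Sum>k<n. complex_of_real (s / n) * T (real k * (s / n)) h x)"

lemma Riemann_sum_L2: "h \<in> L2 M \<Longrightarrow> s \<ge> 0 \<Longrightarrow> Riemann_sum h s n \<in> L2 M"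
  unfolding Riemann_sum_def[abs_def] by (intro L2_sum L2_cmult T_L2) auto

lemma Riemann_sum_refine_le:
  assumes h: "h \<in> L2 M" and "s > 0" "n > 0" "k > 0"
    and small: "\<And>v. 0 \<le> v \<Longrightarrow> v < s / n \<Longrightarrow> L2norm M (\<lambda>x. T v h x - h x) \<le> e"
  shows "L2norm M (\<lambda>x. Riemann_sum h s (n * k) x - Riemann_sum h s n x) \<le> s * e"
proof -
  define w where "w = s / (n * k)"
  have w: "w > 0" "real k * w = s / n"
    using assms by (auto simp: w_def)
  have "Riemann_sum h s (n * k) x = (\<Sum>l<n. \<Sum>i<k. complex_of_real w * T (real l * (s / n) + real i * w) h x)" for x
  proof -
    have "real (l * k + i) * (s / real (n * k)) = real l * (s / n) + real i * w" for l i
      using assms by (simp add: w_def field_simps)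
    then show ?thesis
      unfolding Riemann_sum_def sum_lessThan_mult_split by (simp add: w_def)
  qed
  moreover have "Riemann_sum h s n x = (\<Sum>l<n. \<Sum>i<k. complex_of_real w * T (real l * (s / n)) h x)" for x
    unfolding Riemann_sum_def using w(2) by (simp flip: w(2) add: sum_distrib_right algebra_simps)
  ultimately have "L2norm M (\<lambda>x. Riemann_sum h s (n * k) x - Riemann_sum h s n x)
      = L2norm M (\<lambda>x. \<Sum>l<n. \<Sum>i<k. complex_of_real w *
          (T (real l * (s / n) + real i * w) h x - T (real l * (s / n)) h x))"
    by (simp add: sum_subtractf right_diff_distrib)
  also have "\<dots> \<le> (\<Sum>l<n. L2norm M (\<lambda>x. \<Sum>i<k. complex_of_real w *
      (T (real l * (s / n) + real i * w) h x - T (real l * (s / n)) h x)))"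
    using h \<open>s > 0\<close> w by (intro L2norm_sum_le L2_sum L2_cmult L2_diff T_L2) auto
  also have "\<dots> \<le> (\<Sum>l<n. real k * w * e)"
  proof (rule sum_mono)
    fix l
    have "real i * w < s / n" if "i < k" for i
      using that w by (simp flip: w(2))
    then show "L2norm M (\<lambda>x. \<Sum>i<k. complex_of_real w *
        (T (real l * (s / n) + real i * w) h x - T (real l * (s / n)) h x)) \<le> real k * w * e"
      using L2norm_sum_T_increments_le[OF h, of "{..<k}" "\<lambda>_. real l * (s / n)" "\<lambda>i. real i * w" e
          "complex_of_real w"] \<open>s > 0\<close> w small by simp
  qed
  also have "\<dots> = s * e"
    using assms w by simp
  finally show ?thesis .
qed

lemma Riemann_sum_converges:
  assumes h: "h \<in> L2 M" and "s > 0"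
  obtains F where "F \<in> L2 M" "\<And>e. e > 0 \<Longrightarrow> \<exists>N. \<forall>n\<ge>N. L2norm M (\<lambda>x. F x - Riemann_sum h s n x) < e"
proof -
  have "\<exists>N. \<forall>m\<ge>N. \<forall>n\<ge>N. L2norm M (\<lambda>x. Riemann_sum h s m x - Riemann_sum h s n x) < e"
    if e: "e > 0" for e
  proof -
    obtain d where d: "d > 0" "\<And>v. 0 \<le> v \<Longrightarrow> v < d \<Longrightarrow> L2norm M (\<lambda>x. T v h x - h x) < e / (3 * s)"
      using T_increment_small[OF h, of "e / (3 * s)"] e \<open>s > 0\<close> by auto
    obtain N :: nat where N: "s / d < N"
      using reals_Archimedean2 by blast
    have refine: "L2norm M (\<lambda>x. Riemann_sum h s (m * n) x - Riemann_sum h s m x) \<le> s * (e / (3 * s))"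
      if "m \<ge> N" "n \<ge> N" for m n
    proof (rule Riemann_sum_refine_le[OF h \<open>s > 0\<close>])
      show "m > 0" "n > 0"
        using that N d(1) \<open>s > 0\<close> by (auto intro: Nat.gr0I simp: field_simps)
      have "s < d * real N"
        using N d(1) by (simp add: field_simps)
      also have "\<dots> \<le> d * real m"
        using that d(1) by (intro mult_left_mono) auto
      finally have "s / m \<le> d"
        using \<open>m > 0\<close> by (simp add: field_simps)
      then show "L2norm M (\<lambda>x. T v h x - h x) \<le> e / (3 * s)" if "0 \<le> v" "v < s / m" for v
        using d(2)[of v] that by simp
    qed
    have "L2norm M (\<lambda>x. Riemann_sum h s m x - Riemann_sum h s n x) < e" if "m \<ge> N" "n \<ge> N" for m n
    proof -
      have "L2norm M (\<lambda>x. Riemann_sum h s m x - Riemann_sum h s n x)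
          \<le> L2norm M (\<lambda>x. Riemann_sum h s m x - Riemann_sum h s (m * n) x)
            + L2norm M (\<lambda>x. Riemann_sum h s (m * n) x - Riemann_sum h s n x)"
        using h \<open>s > 0\<close> by (intro L2norm_triangle_diff Riemann_sum_L2) auto
      also have "\<dots> \<le> s * (e / (3 * s)) + s * (e / (3 * s))"
        using refine[of m n] refine[of n m] that
        by (simp add: L2norm_diff_commute[of M "Riemann_sum h s m"] mult.commute[of n m])
      also have "\<dots> < e"
        using e \<open>s > 0\<close> by simp
      finally show ?thesis .
    qed
    then show ?thesis
      by blast
  qed
  moreover have "Riemann_sum h s n \<in> L2 M" for n
    using h \<open>s > 0\<close> by (simp add: Riemann_sum_L2)
  ultimately show thesis
    using L2_complete[of "Riemann_sum h s" M] that by blast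
qed

lemma T_Riemann_sum:
  assumes h: "h \<in> L2 M" and "s \<ge> 0" "t \<ge> 0"
  shows "AE x in M. T t (Riemann_sum h s n) x
    = (\<Sum>k<n. complex_of_real (s / n) * T (t + real k * (s / n)) h x)"
proof -
  have nonneg: "0 \<le> real k * (s / n)" for k
    using \<open>s \<ge> 0\<close> by simp
  have "AE x in M. T t (Riemann_sum h s n) x = (\<Sum>k<n. complex_of_real (s / n) * T t (T (real k * (s / n)) h) x)"
    unfolding Riemann_sum_def[abs_def] using h nonneg \<open>t \<ge> 0\<close> by (intro T_sum T_L2) auto
  moreover have "AE x in M. \<forall>k\<in>{..<n}. T t (T (real k * (s / n)) h) x = T (t + real k * (s / n)) h x"
    using h nonneg \<open>t \<ge> 0\<close> by (intro AE_finite_allI) (auto intro: AE_symmetric[OF T_add_time])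
  ultimately show ?thesis
    by eventually_elim simp
qed

text \<open>With step \<open>d = s / n\<close> and \<open>t = m d + r\<close>, applying \<open>T t\<close> moves the sample points \<open>m\<close> steps
  to the right (up to the offset \<open>r\<close>): \<open>m\<close> of them now lie beyond \<open>s\<close>, close to \<open>T s h\<close>, and
  the \<open>m\<close> points near \<open>0\<close>, close to \<open>h\<close>, are lost.\<close>

lemma T_Riemann_sum_decomposition:
  fixes n m :: nat
  assumes h: "h \<in> L2 M" and "n > 0" "t \<ge> 0" "d \<ge> 0"
    and d: "real n * d = s" and r: "t = real m * d + r"
  shows "AE x in M. T t (Riemann_sum h s n) x - Riemann_sum h s n x + t * (h x - T s h x)
    = (\<Sum>k<n. complex_of_real d * (T (real (k + m) * d + r) h x - T (real (k + m) * d) h x))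
      + (\<Sum>k<m. complex_of_real d * (T (s + real k * d) h x - T s h x))
      + (\<Sum>k<m. complex_of_real d * (h x - T (real k * d) h x))
      + r * (h x - T s h x)"
proof -
  have "s / n = d" "s \<ge> 0"
    using d \<open>n > 0\<close> \<open>d \<ge> 0\<close> by (auto simp: field_simps)
  from T_Riemann_sum[OF h \<open>s \<ge> 0\<close> \<open>t \<ge> 0\<close>, of n] show ?thesis
  proof eventually_elim
    case (elim x)
    define a where "a j = complex_of_real d * T (real j * d) h x" for j
    define E1 where "E1 = (\<Sum>k<n. complex_of_real d * (T (real (k + m) * d + r) h x - T (real (k + m) * d) h x))"
    define E2 where "E2 = (\<Sum>k<m. complex_of_real d * (T (s + real k * d) h x - T s h x))"
    define E3 where "E3 = (\<Sum>k<m. complex_of_real d * (h x - T (real k * d) h x))"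
    have "t + real k * d = real (k + m) * d + r" for k
      using r by (simp add: algebra_simps)
    then have "T t (Riemann_sum h s n) x = E1 + (\<Sum>k<n. a (k + m))"
      using elim \<open>s / n = d\<close> by (simp add: E1_def a_def sum_subtractf right_diff_distrib)
    moreover have "Riemann_sum h s n x = (\<Sum>k<n. a k)"
      using \<open>s / n = d\<close> by (simp add: Riemann_sum_def a_def)
    ultimately have "T t (Riemann_sum h s n) x - Riemann_sum h s n x + t * (h x - T s h x)
        = E1 + ((\<Sum>k<n. a (k + m)) - (\<Sum>k<n. a k)) + t * (h x - T s h x)"
      by simp
    also have "\<dots> = E1 + ((\<Sum>k<m. a (n + k)) - (\<Sum>k<m. a k)) + t * (h x - T s h x)"
      by (simp only: sum_lessThan_shift_diff)
    also have "(\<Sum>k<m. a (n + k)) = E2 + real m * d * T s h x"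
      using d by (simp add: E2_def a_def sum_subtractf right_diff_distrib algebra_simps)
    also have "(\<Sum>k<m. a k) = real m * d * h x - E3"
      by (simp add: E3_def a_def sum_subtractf right_diff_distrib)
    finally show ?case
      unfolding E1_def[symmetric] E2_def[symmetric] E3_def[symmetric] r by (simp add: algebra_simps)
  qed
qed

lemma Riemann_sum_generator_bound:
  fixes n :: nat
  assumes h: "h \<in> L2 M" and "s > 0" "n > 0" "t > 0"
    and e1: "\<And>v. 0 \<le> v \<Longrightarrow> v < s / n \<Longrightarrow> L2norm M (\<lambda>x. T v h x - h x) \<le> e1"
    and e2: "\<And>v. 0 \<le> v \<Longrightarrow> v < t \<Longrightarrow> L2norm M (\<lambda>x. T v h x - h x) \<le> e2"
  shows "L2norm M (\<lambda>x. T t (Riemann_sum h s n) x - Riemann_sum h s n x + t * (h x - T s h x))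
    \<le> s * e1 + 2 * t * e2 + s / n * L2norm M (\<lambda>x. h x - T s h x)"
proof -
  define d where "d = s / n"
  have d: "d > 0" "real n * d = s"
    using assms by (auto simp: d_def)
  define m where "m = nat \<lfloor>t / d\<rfloor>"
  have "real m \<le> t / d" "t / d < real m + 1"
    using \<open>t > 0\<close> d(1) by (auto simp: m_def)
  then have md: "real m * d \<le> t" "t < real m * d + d"
    using d(1) by (auto simp: field_simps)
  define r where "r = t - real m * d"
  have r: "0 \<le> r" "r < d"
    using md by (auto simp: r_def)
  define H where "H x = h x - T s h x" for x
  define E1 where "E1 x = (\<Sum>k<n. complex_of_real d * (T (real (k + m) * d + r) h x - T (real (k + m) * d) h x))" for x
  define E2 where "E2 x = (\<Sum>k<m. complex_of_real d * (T (s + real k * d) h x - T s h x))" for x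
  define E3 where "E3 x = (\<Sum>k<m. complex_of_real d * (h x - T (real k * d) h x))" for x
  have L2: "(\<lambda>x. T a h x - T b h x) \<in> L2 M" if "a \<ge> 0" "b \<ge> 0" for a b
    using h that by (auto intro!: L2_diff T_L2)
  have L2': "(\<lambda>x. h x - T b h x) \<in> L2 M" if "b \<ge> 0" for b
    using h that by (auto intro!: L2_diff T_L2)
  have E_L2: "E1 \<in> L2 M" "E2 \<in> L2 M" "E3 \<in> L2 M" "(\<lambda>x. r * H x) \<in> L2 M"
    unfolding E1_def[abs_def] E2_def[abs_def] E3_def[abs_def] H_def[abs_def]
    using d(1) r(1) \<open>s > 0\<close> by (auto intro!: L2_sum L2_cmult L2 L2')
  have "AE x in M. T t (Riemann_sum h s n) x - Riemann_sum h s n x + t * H x = E1 x + E2 x + E3 x + r * H x"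
    unfolding E1_def E2_def E3_def H_def
    by (rule T_Riemann_sum_decomposition[OF h \<open>n > 0\<close>]) (use \<open>t > 0\<close> d in \<open>auto simp: r_def\<close>)
  then have "L2norm M (\<lambda>x. T t (Riemann_sum h s n) x - Riemann_sum h s n x + t * H x)
      = L2norm M (\<lambda>x. E1 x + E2 x + E3 x + r * H x)"
    using h E_L2 \<open>s > 0\<close> \<open>t > 0\<close>
    by (intro L2norm_cong_AE) (auto intro!: L2_borel_measurable L2_add L2_diff L2_cmult T_L2 Riemann_sum_L2 simp: H_def[abs_def])
  also have "\<dots> \<le> L2norm M E1 + L2norm M E2 + L2norm M E3 + L2norm M (\<lambda>x. r * H x)"
  proof -
    have "(\<lambda>x. E1 x + E2 x) \<in> L2 M" "(\<lambda>x. E1 x + E2 x + E3 x) \<in> L2 M"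
      using E_L2 by (auto intro!: L2_add)
    then show ?thesis
      using E_L2 L2norm_triangle[of "\<lambda>x. E1 x + E2 x + E3 x" M "\<lambda>x. r * H x"]
        L2norm_triangle[of "\<lambda>x. E1 x + E2 x" M E3] L2norm_triangle[of E1 M E2]
      by linarith
  qed
  also have "\<dots> \<le> s * e1 + t * e2 + t * e2 + d * L2norm M H"
  proof (intro add_mono)
    have "L2norm M E1 \<le> real n * d * e1"
      unfolding E1_def[abs_def]
      using L2norm_sum_T_increments_le[OF h, of "{..<n}" "\<lambda>k. real (k + m) * d" "\<lambda>_. r" e1
          "complex_of_real d"] d(1) r(1) e1[of r] r(2)[unfolded d_def] by simp
    then show "L2norm M E1 \<le> s * e1"
      using d(2) by simp
    have e2_nonneg: "0 \<le> e2"
      using e2[of 0] \<open>t > 0\<close> L2norm_nonneg order_trans by blast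
    have small: "L2norm M (\<lambda>x. T (real k * d) h x - h x) \<le> e2" if "k < m" for k
    proof (rule e2)
      have "real k * d < real m * d"
        using that d(1) by simp
      then show "real k * d < t"
        using md(1) by linarith
    qed (use d(1) in simp)
    have "L2norm M E2 \<le> real m * d * e2"
      unfolding E2_def[abs_def]
      using L2norm_sum_T_increments_le[OF h, of "{..<m}" "\<lambda>_. s" "\<lambda>k. real k * d" e2 "complex_of_real d"]
        d(1) \<open>s > 0\<close> small by simp
    also have "\<dots> \<le> t * e2"
      using md(1) e2_nonneg by (intro mult_right_mono)
    finally show "L2norm M E2 \<le> t * e2" .
    have "L2norm M E3 \<le> real m * d * e2"
      unfolding E3_def[abs_def] using d(1) small
        L2norm_sum_cmult_le[of "{..<m}" "\<lambda>k x. h x - T (real k * d) h x" M e2 "complex_of_real d"]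
      by (simp add: L2' L2norm_diff_commute[of M h])
    also have "\<dots> \<le> t * e2"
      using md(1) e2_nonneg by (intro mult_right_mono)
    finally show "L2norm M E3 \<le> t * e2" .
    show "L2norm M (\<lambda>x. r * H x) \<le> d * L2norm M H"
      using r by (simp add: L2norm_cmult mult_right_mono L2norm_nonneg)
  qed
  finally show ?thesis
    by (simp add: H_def[abs_def] d_def algebra_simps)
qed

lemma Riemann_limit_generator_bound:
  assumes h: "h \<in> L2 M" and "s > 0" and F: "F \<in> L2 M"
    and lim: "\<And>\<epsilon>. \<epsilon> > 0 \<Longrightarrow> \<exists>N. \<forall>n\<ge>N. L2norm M (\<lambda>x. F x - Riemann_sum h s n x) < \<epsilon>"
    and "t > 0" and e: "\<And>v. 0 \<le> v \<Longrightarrow> v < t \<Longrightarrow> L2norm M (\<lambda>x. T v h x - h x) \<le> e"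
  shows "L2norm M (\<lambda>x. T t F x - F x + t * (h x - T s h x)) \<le> 2 * t * e"
proof (rule field_le_epsilon)
  fix \<epsilon> :: real
  assume "\<epsilon> > 0"
  define H where "H = (\<lambda>x. h x - T s h x)"
  have H: "H \<in> L2 M"
    using h \<open>s > 0\<close> by (auto simp: H_def intro!: L2_diff T_L2)
  obtain d where d: "d > 0" "\<And>v. 0 \<le> v \<Longrightarrow> v < d \<Longrightarrow> L2norm M (\<lambda>x. T v h x - h x) < \<epsilon> / (4 * s)"
    using T_increment_small[OF h, of "\<epsilon> / (4 * s)"] \<open>\<epsilon> > 0\<close> \<open>s > 0\<close> by auto
  obtain N where N: "\<And>n. n \<ge> N \<Longrightarrow> L2norm M (\<lambda>x. F x - Riemann_sum h s n x) < \<epsilon> / 4"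
    using lim[of "\<epsilon> / 4"] \<open>\<epsilon> > 0\<close> by auto
  have lim0: "(\<lambda>n. s / real n) \<longlonglongrightarrow> 0"
    by (rule lim_const_over_n)
  have "\<forall>\<^sub>F n in sequentially. s / n < d"
    using lim0 d(1) by (rule order_tendstoD)
  moreover have "\<forall>\<^sub>F n in sequentially. s / n * L2norm M H < \<epsilon> / 4"
    using order_tendstoD(2)[OF tendsto_mult_left_zero[OF lim0, of "L2norm M H"], of "\<epsilon> / 4"] \<open>\<epsilon> > 0\<close>
    by simp
  moreover have "\<forall>\<^sub>F n in sequentially. n \<ge> max 1 N"
    by (rule eventually_ge_at_top)
  ultimately have "\<forall>\<^sub>F n in sequentially. s / n < d \<and> s / n * L2norm M H < \<epsilon> / 4 \<and> n \<ge> max 1 N"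
    by eventually_elim simp
  then obtain n :: nat where "s / n < d" "s / n * L2norm M H \<le> \<epsilon> / 4" "n > 0" "n \<ge> N"
    by (auto simp: eventually_sequentially)
  define R where "R = Riemann_sum h s n"
  have R: "R \<in> L2 M"
    using h \<open>s > 0\<close> by (simp add: R_def Riemann_sum_L2)
  have TF: "T t F \<in> L2 M" and TR: "T t R \<in> L2 M"
    using F R \<open>t > 0\<close> by (auto intro: T_L2)
  have "L2norm M (\<lambda>x. T t F x - F x + t * H x)
      = L2norm M (\<lambda>x. (T t F x - T t R x) + (R x - F x) + (T t R x - R x + t * H x))"
    by (simp add: algebra_simps)
  also have "\<dots> \<le> L2norm M (\<lambda>x. T t F x - T t R x) + L2norm M (\<lambda>x. R x - F x)
      + L2norm M (\<lambda>x. T t R x - R x + t * H x)"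
  proof -
    have L2: "(\<lambda>x. T t F x - T t R x) \<in> L2 M" "(\<lambda>x. R x - F x) \<in> L2 M"
      "(\<lambda>x. T t R x - R x + t * H x) \<in> L2 M"
      using TF TR F R H by (auto intro!: L2_diff L2_add L2_cmult)
    then show ?thesis
      using L2norm_triangle[OF L2_add[OF L2(1,2)] L2(3)] L2norm_triangle[OF L2(1,2)] by simp
  qed
  also have "\<dots> \<le> \<epsilon> / 4 + \<epsilon> / 4 + (s * (\<epsilon> / (4 * s)) + 2 * t * e + \<epsilon> / 4)"
  proof (intro add_mono)
    show "L2norm M (\<lambda>x. T t F x - T t R x) \<le> \<epsilon> / 4"
      using T_contraction_diff[of t F R] F R \<open>t > 0\<close> N[OF \<open>n \<ge> N\<close>] by (simp add: R_def)
    show "L2norm M (\<lambda>x. R x - F x) \<le> \<epsilon> / 4"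
      using N[OF \<open>n \<ge> N\<close>] L2norm_diff_commute[of M R F] by (simp add: R_def)
    have "L2norm M (\<lambda>x. T t R x - R x + t * H x)
        \<le> s * (\<epsilon> / (4 * s)) + 2 * t * e + s / n * L2norm M H"
      unfolding R_def H_def
    proof (rule Riemann_sum_generator_bound[OF h \<open>s > 0\<close> \<open>n > 0\<close> \<open>t > 0\<close> _ e])
      show "L2norm M (\<lambda>x. T v h x - h x) \<le> \<epsilon> / (4 * s)" if "0 \<le> v" "v < s / n" for v
        using d(2)[of v] that \<open>s / n < d\<close> by simp
    qed
    then show "L2norm M (\<lambda>x. T t R x - R x + t * H x) \<le> s * (\<epsilon> / (4 * s)) + 2 * t * e + \<epsilon> / 4"
      using \<open>s / n * L2norm M H \<le> \<epsilon> / 4\<close> by linarith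
  qed
  also have "\<dots> = 2 * t * e + \<epsilon>"
    using \<open>s > 0\<close> by simp
  finally show "L2norm M (\<lambda>x. T t F x - F x + t * (h x - T s h x)) \<le> 2 * t * e + \<epsilon>"
    by (simp add: H_def)
qed

lemma increment_in_range:
  assumes h: "h \<in> L2 M" and "s > 0"
  shows "\<exists>F. op_graph M T F (\<lambda>x. h x - T s h x)"
proof -
  obtain F where F: "F \<in> L2 M"
    and lim: "\<And>\<epsilon>. \<epsilon> > 0 \<Longrightarrow> \<exists>N. \<forall>n\<ge>N. L2norm M (\<lambda>x. F x - Riemann_sum h s n x) < \<epsilon>"
    using Riemann_sum_converges[OF h \<open>s > 0\<close>] by blast
  have "((\<lambda>t. L2norm M (\<lambda>x. (T t F x - F x) / complex_of_real t + (h x - T s h x))) \<longlongrightarrow> 0) (at_right 0)"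
  proof (rule order_tendstoI)
    fix a :: real
    assume "a < 0"
    then show "\<forall>\<^sub>F t in at_right 0. a < L2norm M (\<lambda>x. (T t F x - F x) / complex_of_real t + (h x - T s h x))"
      using L2norm_nonneg less_le_trans by (intro always_eventually) blast
  next
    fix a :: real
    assume "a > 0"
    obtain d where d: "d > 0" "\<And>v. 0 \<le> v \<Longrightarrow> v < d \<Longrightarrow> L2norm M (\<lambda>x. T v h x - h x) < a / 3"
      using T_increment_small[OF h, of "a / 3"] \<open>a > 0\<close> by auto
    have "L2norm M (\<lambda>x. (T t F x - F x) / complex_of_real t + (h x - T s h x)) < a"
      if "0 < t" "t < d" for t
    proof -
      have "(\<lambda>x. (T t F x - F x) / complex_of_real t + (h x - T s h x))
          = (\<lambda>x. (T t F x - F x + t * (h x - T s h x)) / complex_of_real t)"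
        using that by (auto simp: field_simps)
      then have "L2norm M (\<lambda>x. (T t F x - F x) / complex_of_real t + (h x - T s h x))
          = L2norm M (\<lambda>x. T t F x - F x + t * (h x - T s h x)) / t"
        using that by (simp add: L2norm_divide)
      also have "\<dots> \<le> 2 * t * (a / 3) / t"
        using that d by (intro divide_right_mono Riemann_limit_generator_bound h \<open>s > 0\<close> F lim less_imp_le) auto
      also have "\<dots> < a"
        using that \<open>a > 0\<close> by simp
      finally show ?thesis .
    qed
    then show "\<forall>\<^sub>F t in at_right 0. L2norm M (\<lambda>x. (T t F x - F x) / complex_of_real t + (h x - T s h x)) < a"
      unfolding eventually_at_right_field using d(1) by blast
  qed
  then have "op_graph M T F (\<lambda>x. h x - T s h x)"
    using F h \<open>s > 0\<close> by (simp add: op_graph_def L2_diff T_L2)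
  then show ?thesis
    by blast
qed

end

section \<open>Decay from the generalized Davies-Gaffney estimate\<close>

lemma rho_pos: "t > 0 \<Longrightarrow> rho \<beta>1 \<beta>2 t > 0"
  by (simp add: rho_def)

locale generalized_Davies_Gaffney = symmetric_contraction_semigroup M T
  for M :: "'a::metric_space measure" and T +
  fixes p0 \<beta>1 \<beta>2 :: real
  assumes mms: "mms M" and reverse_doubling: "reverse_doubling M"
    and p0: "1 \<le> p0" "p0 < 2" and DG: "DG M T p0 \<beta>1 \<beta>2"
begin

lemma sets_M: "sets M = sets borel"
  using mms by (simp add: mms_def)

lemma ball_in_sets [measurable]: "ball x r \<in> sets M"
  by (simp add: sets_M)

lemma emeasure_ball_finite: "emeasure M (ball x r) < \<infinity>"
  using mms by (cases "r > 0") (auto simp: mms_def ball_empty)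

lemma V_pos: "r > 0 \<Longrightarrow> V M x r > 0"
  using mms by (auto simp: mms_def V_def measure_def enn2real_positive_iff)

lemma V_unbounded: "\<exists>t\<ge>t0. V M z t \<ge> B"
proof -
  obtain \<nu> c where "\<nu> > 0" "c > 0" and RD: "\<And>r s. 0 < s \<Longrightarrow> s \<le> r \<Longrightarrow> V M z r / V M z s \<ge> c * (r / s) powr \<nu>"
    using reverse_doubling unfolding reverse_doubling_def by blast
  define t where "t = max (max t0 1) ((max 0 B / (c * V M z 1)) powr (1 / \<nu>))"
  have "t \<ge> 1" "t \<ge> t0"
    by (auto simp: t_def)
  have "max 0 B / (c * V M z 1) = ((max 0 B / (c * V M z 1)) powr (1 / \<nu>)) powr \<nu>"
    using \<open>\<nu> > 0\<close> \<open>c > 0\<close> V_pos[of 1 z] by (simp add: powr_powr)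
  also have "\<dots> \<le> t powr \<nu>"
    using \<open>\<nu> > 0\<close> by (intro powr_mono2) (auto simp: t_def)
  finally have "max 0 B \<le> c * V M z 1 * t powr \<nu>"
    using \<open>c > 0\<close> V_pos[of 1 z] by (simp add: field_simps)
  also have "\<dots> \<le> V M z t"
    using RD[of 1 t] \<open>t \<ge> 1\<close> V_pos[of 1 z] by (simp add: field_simps)
  finally show ?thesis
    using \<open>t \<ge> t0\<close> by auto
qed

text \<open>Only the diagonal case \<open>x = y\<close> of DG is needed; there the Gaussian factor is \<open>1\<close>.\<close>

lemma DG_centred:
  obtains C where "\<And>t g. t > 0 \<Longrightarrow> g \<in> L2 M \<Longrightarrow> (\<And>x. x \<notin> ball z t \<Longrightarrow> g x = 0) \<Longrightarrow>
    Lnorm_le M (conj_exp p0) (\<lambda>x. indicator (ball z t) x * T (rho \<beta>1 \<beta>2 t) g x)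
      (C / V M z t powr (2 / p0 - 1) * Lpnorm M p0 g)"
proof -
  obtain C c where DG': "\<And>x y t f. f \<in> L2 M \<Longrightarrow> t > 0 \<Longrightarrow>
     (let \<beta> = (if t < 1 then \<beta>1 else \<beta>2); f' = (\<lambda>z. indicator (ball y t) z * f z) in
      Lnorm_le M (conj_exp p0) (\<lambda>z. indicator (ball x t) z * T (rho \<beta>1 \<beta>2 t) f' z)
        (C / V M x t powr (1 / p0 - (1 - 1 / p0)) * exp (- c * (dist x y / t) powr (\<beta> / (\<beta> - 1)))
          * Lpnorm M p0 f'))"
    using DG unfolding DG_def by blast
  show thesis
  proof (rule that)
    fix t g
    assume "t > 0" "g \<in> L2 M" and supp: "\<And>x. x \<notin> ball z t \<Longrightarrow> g x = 0"
    have "(\<lambda>x. indicator (ball z t) x * g x) = g"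
      using supp by (intro ext) (auto simp: indicator_def)
    moreover have "1 / p0 - (1 - 1 / p0) = 2 / p0 - 1"
      by (simp add: field_simps)
    ultimately show "Lnorm_le M (conj_exp p0) (\<lambda>x. indicator (ball z t) x * T (rho \<beta>1 \<beta>2 t) g x)
      (C / V M z t powr (2 / p0 - 1) * Lpnorm M p0 g)"
      using DG'[OF \<open>g \<in> L2 M\<close> \<open>t > 0\<close>, of z z] by (simp add: Let_def)
  qed
qed

lemma T_rho_small_near_centre:
  fixes \<eta> :: real
  assumes g: "g \<in> L2 M" and supp: "\<And>x. x \<notin> ball z R \<Longrightarrow> g x = 0" and "\<eta> > 0"
  obtains t where "t > 0"
    "(\<integral>\<^sup>+x. indicator (ball z r) x * ennreal (cmod (T (rho \<beta>1 \<beta>2 t) g x)) \<partial>M) \<le> ennreal \<eta>"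
proof -
  obtain \<alpha> where "\<alpha> > 0" and small: "\<And>u A. u \<in> borel_measurable M \<Longrightarrow> A \<le> \<alpha> \<Longrightarrow>
      Lnorm_le M (conj_exp p0) u A \<Longrightarrow> (\<integral>\<^sup>+x. indicator (ball z r) x * ennreal (cmod (u x)) \<partial>M) \<le> ennreal \<eta>"
    using small_Lnorm_imp_small_integral_on[OF p0(1) ball_in_sets emeasure_ball_finite \<open>\<eta> > 0\<close>] by blast
  obtain C where DGC: "\<And>t g. t > 0 \<Longrightarrow> g \<in> L2 M \<Longrightarrow> (\<And>x. x \<notin> ball z t \<Longrightarrow> g x = 0) \<Longrightarrow>
      Lnorm_le M (conj_exp p0) (\<lambda>x. indicator (ball z t) x * T (rho \<beta>1 \<beta>2 t) g x)
        (C / V M z t powr (2 / p0 - 1) * Lpnorm M p0 g)"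
    using DG_centred by blast
  define Lp where "Lp = Lpnorm M p0 g"
  define ex where "ex = 2 / p0 - 1"
  have "ex > 0"
    using p0 by (simp add: ex_def field_simps)
  obtain t where t: "t \<ge> max (max 1 R) r" "V M z t \<ge> (max 0 (C * Lp / \<alpha>)) powr (1 / ex)"
    using V_unbounded by blast
  then have "t > 0"
    by simp
  have "C * Lp / \<alpha> \<le> ((max 0 (C * Lp / \<alpha>)) powr (1 / ex)) powr ex"
    using \<open>ex > 0\<close> by (simp add: powr_powr)
  also have "\<dots> \<le> V M z t powr ex"
    using t(2) \<open>ex > 0\<close> by (intro powr_mono2) auto
  finally have bound: "C / V M z t powr ex * Lp \<le> \<alpha>"
    using \<open>\<alpha> > 0\<close> V_pos[OF \<open>t > 0\<close>, of z] by (simp add: field_simps)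
  define u where "u x = indicator (ball z t) x * T (rho \<beta>1 \<beta>2 t) g x" for x
  have "u \<in> borel_measurable M"
    using T_borel_measurable[OF less_imp_le[OF rho_pos[OF \<open>t > 0\<close>]] g]
    unfolding u_def[abs_def] by measurable
  moreover have "Lnorm_le M (conj_exp p0) u (C / V M z t powr ex * Lp)"
    unfolding u_def[abs_def] Lp_def ex_def using t(1) supp by (intro DGC \<open>t > 0\<close> g) auto
  ultimately have "(\<integral>\<^sup>+x. indicator (ball z r) x * ennreal (cmod (u x)) \<partial>M) \<le> ennreal \<eta>"
    using small bound by blast
  moreover have "indicator (ball z r) x * ennreal (cmod (u x))
      = indicator (ball z r) x * ennreal (cmod (T (rho \<beta>1 \<beta>2 t) g x))" for x
    using t(1) by (auto simp: u_def indicator_def)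
  ultimately show thesis
    using that[OF \<open>t > 0\<close>] by simp
qed

lemma L2inner_T_rho_small:
  assumes f: "f \<in> L2 M" and g: "g \<in> L2 M" and supp: "\<And>x. x \<notin> ball z R \<Longrightarrow> g x = 0" and "e > 0"
  obtains t where "t > 0" "cmod (L2inner M f (T (rho \<beta>1 \<beta>2 t) g)) \<le> e"
proof -
  have "L2norm M g + 1 > 0"
    using L2norm_nonneg[of M g] by linarith
  with \<open>e > 0\<close> have "e / (2 * (L2norm M g + 1)) > 0"
    by simp
  then obtain n where n: "L2norm M (\<lambda>x. f x - cutoff z n f x) < e / (2 * (L2norm M g + 1))"
    using cutoff_approx[OF sets_M f, of "e / (2 * (L2norm M g + 1))"] by auto
  define f1 where "f1 = cutoff z n f"
  have f1: "f1 \<in> L2 M"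
    unfolding f1_def by (rule cutoff_L2[OF sets_M f])
  define \<eta> where "\<eta> = e / (2 * (real n + 1))"
  obtain t where "t > 0" and near: "(\<integral>\<^sup>+x. indicator (ball z n) x * ennreal (cmod (T (rho \<beta>1 \<beta>2 t) g x)) \<partial>M) \<le> ennreal \<eta>"
    using T_rho_small_near_centre[OF g supp, where \<eta> = \<eta> and r = n] \<open>e > 0\<close> by (auto simp: \<eta>_def)
  define s where "s = rho \<beta>1 \<beta>2 t"
  have "s \<ge> 0"
    unfolding s_def by (rule less_imp_le[OF rho_pos[OF \<open>t > 0\<close>]])
  then have Tg: "T s g \<in> L2 M"
    using g by (rule T_L2)
  have "cmod (L2inner M (\<lambda>x. f x - f1 x) (T s g)) \<le> L2norm M (\<lambda>x. f x - f1 x) * L2norm M (T s g)"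
    using f f1 Tg by (intro L2inner_norm_le L2_diff)
  also have "\<dots> \<le> e / (2 * (L2norm M g + 1)) * L2norm M g"
    using n T_contraction[OF \<open>s \<ge> 0\<close> g] \<open>e / (2 * (L2norm M g + 1)) > 0\<close>
    by (intro mult_mono) (auto simp: f1_def L2norm_nonneg)
  also have "\<dots> \<le> e / 2"
    using \<open>e > 0\<close> L2norm_nonneg[of M g] by (simp add: field_simps)
  finally have part1: "cmod (L2inner M (\<lambda>x. f x - f1 x) (T s g)) \<le> e / 2" .
  have "cmod (L2inner M f1 (T s g)) \<le> n * \<eta>"
    using near \<open>e > 0\<close>
    by (intro L2inner_le_of_bounded_support[OF f1 Tg ball_in_sets])
       (auto simp: f1_def s_def \<eta>_def cutoff_bounded cutoff_outside_ball)
  also have "\<dots> \<le> e / 2"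
    using \<open>e > 0\<close> by (simp add: \<eta>_def field_simps)
  finally have part2: "cmod (L2inner M f1 (T s g)) \<le> e / 2" .
  have "L2inner M f (T s g) = L2inner M (\<lambda>x. f x - f1 x) (T s g) + L2inner M f1 (T s g)"
    using L2inner_diff_left[OF Tg f f1] by simp
  then have "cmod (L2inner M f (T s g)) \<le> cmod (L2inner M (\<lambda>x. f x - f1 x) (T s g)) + cmod (L2inner M f1 (T s g))"
    by (simp add: norm_triangle_ineq)
  with part1 part2 have "cmod (L2inner M f (T s g)) \<le> e"
    by linarith
  then show thesis
    using that[OF \<open>t > 0\<close>] by (simp add: s_def)
qed

lemma null_vector_cutoff_zero:
  assumes null: "op_graph M T f (\<lambda>x. 0)"
  shows "AE x in M. cutoff z n f x = 0"
proof -
  have f: "f \<in> L2 M"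
    using null by (simp add: op_graph_def)
  define g where "g = cutoff z n f"
  have g: "g \<in> L2 M"
    unfolding g_def by (rule cutoff_L2[OF sets_M f])
  have supp: "x \<notin> ball z n \<Longrightarrow> g x = 0" for x
    by (simp add: g_def cutoff_outside_ball)
  have "cmod (L2inner M f g) \<le> 0 + e" if "e > 0" for e
  proof -
    obtain t where "t > 0" "cmod (L2inner M f (T (rho \<beta>1 \<beta>2 t) g)) \<le> e"
      by (rule L2inner_T_rho_small[OF f g supp \<open>e > 0\<close>])
    then show ?thesis
      using L2inner_T_null_vector[OF null g less_imp_le[OF rho_pos]] by simp
  qed
  then have "L2inner M f g = 0"
    using field_le_epsilon[of "cmod (L2inner M f g)" 0] by simp
  then have "L2norm M g = 0"
    by (simp add: g_def L2inner_cutoff)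
  then show ?thesis
    using L2norm_eq_0_imp_AE[OF g] by (simp add: g_def)
qed

lemma null_space_trivial: "null_space_trivial M T"
  unfolding null_space_trivial_def
proof (intro allI impI)
  fix f z
  assume "op_graph M T f (\<lambda>x. 0)"
  then have "AE x in M. \<forall>n. cutoff z n f x = 0"
    by (simp add: AE_all_countable null_vector_cutoff_zero)
  then show "AE x in M. f x = 0"
  proof eventually_elim
    case (elim x)
    obtain n where "cutoff z n f x = f x"
      using eventually_sequentially cutoff_eventually_eq[of z f x] by auto
    with elim show "f x = 0"
      by simp
  qed
qed

lemma T_small_at_some_time:
  assumes h: "h \<in> L2 M" and supp: "\<And>x. x \<notin> ball z R \<Longrightarrow> h x = 0" and "\<epsilon> > 0"
  obtains s where "s > 0" "L2norm M (T s h) \<le> \<epsilon>"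
proof -
  obtain t where "t > 0" and small: "cmod (L2inner M h (T (rho \<beta>1 \<beta>2 t) h)) \<le> \<epsilon>\<^sup>2"
    using L2inner_T_rho_small[OF h h supp, where e = "\<epsilon>\<^sup>2"] \<open>\<epsilon> > 0\<close> by auto
  define s where "s = rho \<beta>1 \<beta>2 t / 2"
  have "s > 0"
    using rho_pos[OF \<open>t > 0\<close>] by (simp add: s_def)
  have "(L2norm M (T s h))\<^sup>2 = cmod (complex_of_real ((L2norm M (T s h))\<^sup>2))"
    by (simp only: norm_of_real abs_power2)
  also have "\<dots> = cmod (L2inner M h (T (s + s) h))"
    unfolding L2norm_T_square[OF h less_imp_le[OF \<open>s > 0\<close>]] ..
  also have "\<dots> \<le> \<epsilon>\<^sup>2"
    using small by (simp add: s_def)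
  finally have "L2norm M (T s h) \<le> \<epsilon>"
    by (rule power2_le_imp_le) (use \<open>\<epsilon> > 0\<close> in simp)
  with \<open>s > 0\<close> show thesis
    by (rule that)
qed

lemma range_dense: "range_dense M T"
  unfolding range_dense_def
proof (intro ballI allI impI)
  fix h z and \<epsilon> :: real
  assume h: "h \<in> L2 M" and "\<epsilon> > 0"
  then obtain n where n: "L2norm M (\<lambda>x. h x - cutoff z n h x) < \<epsilon> / 2"
    using cutoff_approx[OF sets_M h, of "\<epsilon> / 2"] by auto
  define h0 where "h0 = cutoff z n h"
  have h0: "h0 \<in> L2 M"
    unfolding h0_def by (rule cutoff_L2[OF sets_M h])
  obtain s where "s > 0" and Ts: "L2norm M (T s h0) \<le> \<epsilon> / 2"
    by (rule T_small_at_some_time[OF h0, of z n "\<epsilon> / 2"]) (use \<open>\<epsilon> > 0\<close> in \<open>simp_all add: h0_def cutoff_outside_ball\<close>)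
  obtain F where "op_graph M T F (\<lambda>x. h0 x - T s h0 x)"
    using increment_in_range[OF h0 \<open>s > 0\<close>] by blast
  moreover have "L2norm M (\<lambda>x. (h0 x - T s h0 x) - h x) < \<epsilon>"
  proof -
    have "L2norm M (\<lambda>x. (h0 x - T s h0 x) - h x)
        \<le> L2norm M (\<lambda>x. (h0 x - T s h0 x) - h0 x) + L2norm M (\<lambda>x. h0 x - h x)"
      using h0 h \<open>s > 0\<close> by (intro L2norm_triangle_diff L2_diff T_L2) auto
    moreover have "L2norm M (\<lambda>x. (h0 x - T s h0 x) - h0 x) = L2norm M (T s h0)"
      using L2norm_uminus[of M "T s h0"] by simp
    moreover have "L2norm M (\<lambda>x. h0 x - h x) < \<epsilon> / 2"
      using n L2norm_diff_commute[of M h0 h] by (simp add: h0_def)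
    ultimately show ?thesis
      using Ts \<open>\<epsilon> > 0\<close> by linarith
  qed
  ultimately show "\<exists>f g. op_graph M T f g \<and> L2norm M (\<lambda>x. g x - h x) < \<epsilon>"
    by blast
qed

end

theorem mainTheorem5:
  fixes mu :: "('a::metric_space) measure"
    and T :: "real \<Rightarrow> ('a \<Rightarrow> complex) \<Rightarrow> ('a \<Rightarrow> complex)"
    and p0 \<beta>1 \<beta>2 :: real
  assumes "mms mu"
    and "\<not> compact (UNIV :: 'a set)"
    and "doubling mu"
    and "reverse_doubling mu"
    and "1 < \<beta>1" and "\<beta>1 \<le> \<beta>2"
    and "1 \<le> p0" and "p0 < 2"
    and "heat_semigroup mu T"
    and "DG mu T p0 \<beta>1 \<beta>2"
  shows "null_space_trivial mu T \<and> range_dense mu T"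
proof -
  interpret generalized_Davies_Gaffney mu T p0 \<beta>1 \<beta>2
    by unfold_locales (fact assms)+
  show ?thesis
    using null_space_trivial range_dense by blast
qed

end
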